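(* Let $R$ be a unital associative ring and $$A=\begin{pmatrix}1&1&1\\1&a&b\\1&c&d\end{pmatrix}\in\widehat{\cal S}.$$ Then $\Phi^2(A)=\omega^{-1}\Phi^{-1}(A)\omega$, where $$\omega=\bigl[d(d-b)^{-1}-c(c-a)^{-1}\bigr]^{-1}\bigl[d(d-b)^{-1}(b-1)-c(c-a)^{-1}(a-1)\bigr]\bigl[(d-c)^{-1}(c-1)-(b-a)^{-1}(a-1)\bigr].$$
   Context: $R^*$: units of $R$. $M_3^*(R)$: invertible $3\times3$ matrices; $M_3^\star(R)$: matrices with all entries in $R^*$. $J_1(M)=M^{-1}$ on $M_3^*(R)$; $J_2(M)_{jk}=(M_{kj})^{-1}$ on $M_3^\star(R)$; $J=J_2\circ J_1$, $J^{-1}=J_1\circ J_2$, where $g\circ f$ has domain $\{x\in{\rm dom}(f):f(x)\in{\rm dom}(g)\}$. $\widehat M_3(R)$: matrices whose first row and column consist of $1$'s. For $A=\{a_{j,k}\}\in M_3^\star(R)$: $\Lambda^L(A)_{j,k}=a_{1,1}a_{j,1}^{-1}a_{j,k}a_{1,k}^{-1}$, $\Lambda^R(A)_{j,k}=a_{j,1}^{-1}a_{j,k}a_{1,k}^{-1}a_{1,1}$. $\Phi(A)=J_2(\Lambda^L(A^{-1}))$ with ${\rm dom}(\Phi)={\rm dom}(J)\cap\widehat M_3(R)\cap M_3^\star(R)$; $\Phi^{-1}(A)=\Lambda^R(J^{-1}(A))$. ${\cal S}=\{M\in M_3(R):$ all square submatrices of $M$ are invertible and $J_2(M)$ is invertible$\}$,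 $\widehat{\cal S}={\cal S}\cap\widehat M_3(R)$. $\omega^{-1}B\omega$ denotes the matrix with entries $\omega^{-1}B_{jk}\omega$. *)

theory Defs
  imports "HOL-Analysis.Analysis"
begin

text \<open>3x3 matrices over a unital associative (not necessarily commutative) ring
  'a :: ring_1 are represented as 'a^3^3; M $ j $ k is the (j,k) entry, indices 1,2,3.\<close>

definition is_unit :: "'a::ring_1 \<Rightarrow> bool" where
  "is_unit x \<longleftrightarrow> (\<exists>y. x * y = 1 \<and> y * x = 1)"

definition rinv :: "'a::ring_1 \<Rightarrow> 'a" where
  "rinv x = (THE y. x * y = 1 \<and> y * x = 1)"

definition minvertible :: "'a::ring_1^3^3 \<Rightarrow> bool" where
  "minvertible M \<longleftrightarrow> (\<exists>N. M ** N = mat 1 \<and> N ** M = mat 1)"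

definition minv :: "'a::ring_1^3^3 \<Rightarrow> 'a^3^3" where
  "minv M = (THE N. M ** N = mat 1 \<and> N ** M = mat 1)"

definition all_units :: "'a::ring_1^3^3 \<Rightarrow> bool" where
  "all_units M \<longleftrightarrow> (\<forall>j k. is_unit (M $ j $ k))"

definition J1 :: "'a::ring_1^3^3 \<Rightarrow> 'a^3^3" where
  "J1 M = minv M"

definition J2 :: "'a::ring_1^3^3 \<Rightarrow> 'a^3^3" where
  "J2 M = (\<chi> j k. rinv (M $ k $ j))"

text \<open>domain of J = J2 o J1, and of J^{-1} = J1 o J2\<close>
definition dom_J :: "'a::ring_1^3^3 \<Rightarrow> bool" where
  "dom_J M \<longleftrightarrow> minvertible M \<and> all_units (J1 M)"

definition dom_Jinv :: "'a::ring_1^3^3 \<Rightarrow> bool" where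
  "dom_Jinv M \<longleftrightarrow> all_units M \<and> minvertible (J2 M)"

definition Jinv :: "'a::ring_1^3^3 \<Rightarrow> 'a^3^3" where
  "Jinv M = J1 (J2 M)"

definition hat :: "'a::ring_1^3^3 \<Rightarrow> bool" where
  "hat M \<longleftrightarrow> (\<forall>k. M $ 1 $ k = 1 \<and> M $ k $ 1 = 1)"

definition LambdaL :: "'a::ring_1^3^3 \<Rightarrow> 'a^3^3" where
  "LambdaL A = (\<chi> j k. A$1$1 * rinv (A$j$1) * A$j$k * rinv (A$1$k))"

definition LambdaR :: "'a::ring_1^3^3 \<Rightarrow> 'a^3^3" where
  "LambdaR A = (\<chi> j k. rinv (A$j$1) * A$j$k * rinv (A$1$k) * A$1$1)"

definition Phi :: "'a::ring_1^3^3 \<Rightarrow> 'a^3^3" where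
  "Phi A = J2 (LambdaL (minv A))"

definition dom_Phi :: "'a::ring_1^3^3 \<Rightarrow> bool" where
  "dom_Phi A \<longleftrightarrow> dom_J A \<and> hat A \<and> all_units A"

definition Phi_inv :: "'a::ring_1^3^3 \<Rightarrow> 'a^3^3" where
  "Phi_inv A = LambdaR (Jinv A)"

text \<open>The square submatrix of M with row set I and column set K (|I| = |K| > 0)
  is invertible: there is N (indexed by K x I) with (M|IxK) N = 1_I and N (M|IxK) = 1_K.\<close>
definition sub_invertible :: "'a::ring_1^3^3 \<Rightarrow> 3 set \<Rightarrow> 3 set \<Rightarrow> bool" where
  "sub_invertible M I K \<longleftrightarrow>
     (\<exists>N::'a^3^3.
        (\<forall>i\<in>I. \<forall>i'\<in>I. (\<Sum>k\<in>K. M$i$k * N$k$i') = (if i = i' then 1 else 0)) \<and>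
        (\<forall>k\<in>K. \<forall>k'\<in>K. (\<Sum>i\<in>I. N$k$i * M$i$k') = (if k = k' then 1 else 0)))"

definition in_S :: "'a::ring_1^3^3 \<Rightarrow> bool" where
  "in_S M \<longleftrightarrow>
     (\<forall>I K. I \<noteq> {} \<and> card I = card K \<longrightarrow> sub_invertible M I K) \<and> minvertible (J2 M)"

definition in_hatS :: "'a::ring_1^3^3 \<Rightarrow> bool" where
  "in_hatS M \<longleftrightarrow> in_S M \<and> hat M"

definition conj_mat :: "'a::ring_1 \<Rightarrow> 'a^3^3 \<Rightarrow> 'a^3^3" where
  "conj_mat w B = (\<chi> j k. rinv w * B$j$k * w)"

definition mat3 :: "'a \<Rightarrow> 'a \<Rightarrow> 'a \<Rightarrow> 'a \<Rightarrow> 'a \<Rightarrow> 'a \<Rightarrow> 'a \<Rightarrow> 'a \<Rightarrow> 'a \<Rightarrow> 'a^3^3" where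
  "mat3 a11 a12 a13 a21 a22 a23 a31 a32 a33 =
     (\<chi> j k. if j = 1 then (if k = 1 then a11 else if k = 2 then a12 else a13)
             else if j = 2 then (if k = 1 then a21 else if k = 2 then a22 else a23)
             else (if k = 1 then a31 else if k = 2 then a32 else a33))"

end

theory Submission
  imports Defs
begin

text \<open>Write \<open>B = A\<^sup>-\<^sup>1\<close> and \<open>C = (J\<^sub>2 A)\<^sup>-\<^sup>1\<close>. Since \<open>J\<^sub>2 A = mat3 1 1 1 1 a\<^sup>-\<^sup>1 c\<^sup>-\<^sup>1 1 b\<^sup>-\<^sup>1 d\<^sup>-\<^sup>1\<close>
  has the same shape as \<open>A\<close>, every formula for the entries of \<open>B\<close> has a dual one for \<open>C\<close>. The
  heart of the proof is an explicit choice of units \<open>k\<^sub>1, k\<^sub>2, k\<^sub>3\<close> for which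
  \<open>J\<^sub>2 B \<cdot> diag k \<cdot> J\<^sub>2 C\<close> is a diagonal matrix of units; together with its dual this shows that
  \<open>J\<^sub>2 B\<close> is invertible with inverse \<open>diag k \<cdot> J\<^sub>2 C \<cdot> diag r\<^sup>-\<^sup>1\<close>. As \<open>\<Phi>(A) = J\<^sub>2(\<Lambda>\<^sup>L B)\<close>
  differs from \<open>J\<^sub>2 B\<close> by diagonal factors only, \<open>\<Phi>(A)\<^sup>-\<^sup>1\<close> is explicit, and in
  \<open>\<Phi>\<^sup>2(A) = J\<^sub>2(\<Lambda>\<^sup>L(\<Phi>(A)\<^sup>-\<^sup>1))\<close> all diagonal factors cancel in the cross ratios taken by \<open>\<Lambda>\<^sup>L\<close>,
  except \<open>k\<^sub>1\<close>. What remains is \<open>\<Lambda>\<^sup>R C = \<Phi>\<^sup>-\<^sup>1(A)\<close> conjugated by \<open>k\<^sub>1\<^sup>-\<^sup>1\<close>, and a computation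
  identifies \<open>k\<^sub>1\<^sup>-\<^sup>1\<close> with \<open>\<omega>\<close>. The inverses used along the way exist because the minors of
  \<open>A\<close> and the matrix \<open>J\<^sub>2 A\<close> are invertible, via Schur complements.\<close>

section \<open>Units and explicit inverses\<close>

lemma is_unitI: "x * y = 1 \<Longrightarrow> y * x = 1 \<Longrightarrow> is_unit (x::'a::ring_1)"
  unfolding is_unit_def by blast

lemma is_unit_one: "is_unit (1::'a::ring_1)"
  unfolding is_unit_def by auto

lemma is_unit_mult: "is_unit x \<Longrightarrow> is_unit y \<Longrightarrow> is_unit (x * y::'a::ring_1)"
  unfolding is_unit_def
proof (elim exE conjE)
  fix x' y' assume "x*x' = 1" "x'*x = 1" "y*y' = 1" "y'*y = 1"
  hence "(x*y)*(y'*x') = 1" "(y'*x')*(x*y) = 1"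
    by (simp_all add: mult.assoc[symmetric]) (simp_all add: mult.assoc)
  thus "\<exists>z. x*y*z = 1 \<and> z*(x*y) = 1" by blast
qed

lemma is_unit_uminus: "is_unit x \<Longrightarrow> is_unit (- x::'a::ring_1)"
  unfolding is_unit_def by (metis minus_mult_minus)

lemma rinv_unique: "x * y = 1 \<Longrightarrow> y * x = 1 \<Longrightarrow> rinv (x::'a::ring_1) = y"
  unfolding rinv_def
proof (rule the_equality)
  fix z assume "x*y = 1" "y*x = 1" and z: "x*z = 1 \<and> z*x = 1"
  have "z = (y*x)*z" using \<open>y*x = 1\<close> by simp
  also have "\<dots> = y*(x*z)" by (simp add: mult.assoc)
  also have "\<dots> = y" using z by simp
  finally show "z = y" .
qed auto

lemma rinv_inverse: "is_unit x \<Longrightarrow> x * rinv x = 1 \<and> rinv x * (x::'a::ring_1) = 1"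
  unfolding is_unit_def using rinv_unique by metis

lemma is_unit_rinv: "is_unit x \<Longrightarrow> is_unit (rinv (x::'a::ring_1))"
  using rinv_inverse is_unitI by metis

lemma rinv_rinv: "is_unit x \<Longrightarrow> rinv (rinv (x::'a::ring_1)) = x"
  using rinv_inverse rinv_unique by metis

lemma rinv_one: "rinv (1::'a::ring_1) = 1"
  by (rule rinv_unique) simp_all

lemma rinv_mult: "is_unit x \<Longrightarrow> is_unit y \<Longrightarrow> rinv (x * y) = rinv y * rinv (x::'a::ring_1)"
proof -
  assume ux: "is_unit x" and uy: "is_unit y"
  note X = rinv_inverse[OF ux] and Y = rinv_inverse[OF uy]
  show ?thesis
  proof (rule rinv_unique)
    have "x*y*(rinv y * rinv x) = x*(y*rinv y)*rinv x" by (simp add: mult.assoc)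
    thus "x*y*(rinv y * rinv x) = 1" using X Y by simp
    have "rinv y * rinv x * (x*y) = rinv y*(rinv x*x)*y" by (simp add: mult.assoc)
    thus "rinv y * rinv x * (x*y) = 1" using X Y by simp
  qed
qed

lemma rinv_mult_cancel: "is_unit x \<Longrightarrow> x * (rinv x * z) = z \<and> rinv x * (x * z) = (z::'a::ring_1)"
  using rinv_inverse by (metis mult.assoc mult_1_left)

lemma rinv_mult_left_eq: "is_unit x \<Longrightarrow> x * y = z \<Longrightarrow> rinv x * z = (y::'a::ring_1)"
  using rinv_inverse by (metis mult.assoc mult_1_left)

lemma mult_rinv_right_eq: "is_unit x \<Longrightarrow> z = y * x \<Longrightarrow> z * rinv x = (y::'a::ring_1)"
  using rinv_inverse by (metis mult.assoc mult_1_right)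

lemma unit_left_inverse_imp_right: "is_unit (x::'a::ring_1) \<Longrightarrow> y * x = 1 \<Longrightarrow> x * y = 1"
proof -
  assume u: "is_unit x" and h: "y*x = 1"
  have "y = y*(x*rinv x)" using rinv_inverse[OF u] by simp
  also have "\<dots> = rinv x" using h by (simp add: mult.assoc[symmetric])
  finally show "x*y = 1" using rinv_inverse[OF u] by simp
qed

lemma is_unit_cancel_right:
  "(x::'a::ring_1) * y = z * w \<Longrightarrow> is_unit y \<Longrightarrow> is_unit z \<Longrightarrow> is_unit w \<Longrightarrow> is_unit x"
proof -
  assume h: "x*y = z*w" and u: "is_unit y" "is_unit z" "is_unit w"
  have "x = x*(y*rinv y)" using rinv_inverse[OF u(1)] by simp
  also have "\<dots> = z*w*rinv y" using h by (simp add: mult.assoc[symmetric])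
  finally show ?thesis using u by (metis is_unit_mult is_unit_rinv)
qed

lemma is_unit_cancel_left: "(y::'a::ring_1) * x = z \<Longrightarrow> is_unit y \<Longrightarrow> is_unit z \<Longrightarrow> is_unit x"
proof -
  assume h: "y*x = z" and u: "is_unit y" "is_unit z"
  have "x = (rinv y*y)*x" using rinv_inverse[OF u(1)] by simp
  also have "\<dots> = rinv y * z" using h by (simp add: mult.assoc)
  finally show ?thesis using u by (metis is_unit_mult is_unit_rinv)
qed

lemma rinv_cross_ratio: "is_unit a \<Longrightarrow> is_unit b \<Longrightarrow> is_unit c \<Longrightarrow> is_unit d \<Longrightarrow>
  rinv (a * rinv b * c * rinv d) = d * rinv c * b * rinv (a::'a::ring_1)"
  by (simp add: rinv_mult is_unit_mult is_unit_rinv rinv_rinv mult.assoc)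

lemma cross_ratio_rescale:
  "is_unit g1 \<Longrightarrow> is_unit gk \<Longrightarrow> is_unit f \<Longrightarrow> is_unit f1 \<Longrightarrow> is_unit p2 \<Longrightarrow> is_unit p4 \<Longrightarrow>
   (g1*p1*f) * rinv (gk*p2*f) * (gk*p3*f1) * rinv (g1*p4*f1) = g1*(p1*rinv p2*p3*rinv p4)*rinv (g1::'a::ring_1)"
  by (simp add: rinv_mult is_unit_mult mult.assoc rinv_mult_cancel)

lemma mult_assoc_eq: "(a::'a::ring_1) * b = c \<Longrightarrow> a * (b * z) = c * z"
  by (simp add: mult.assoc[symmetric])

lemma mult_inverse_cancel: "(u::'a::ring_1) * w = 1 \<Longrightarrow> u * (w * z) = z"
  by (simp add: mult_assoc_eq)

lemma mult3_assoc_eq: "(x::'a::ring_1) * y * w = x' * y' * w' \<Longrightarrow> x * (y * (w * z)) = x' * (y' * (w' * z))"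
  by (simp add: mult.assoc[symmetric])

lemma mult3_inverse:
  "(p::'a::ring_1) * p' = 1 \<Longrightarrow> p' * p = 1 \<Longrightarrow> x * y = 1 \<Longrightarrow> y * x = 1 \<Longrightarrow> q * q' = 1 \<Longrightarrow> q' * q = 1
   \<Longrightarrow> (p*x*q) * (q'*y*p') = 1 \<and> (q'*y*p') * (p*x*q) = 1"
proof -
  assume h: "p*p' = 1" "p'*p = 1" "x*y = 1" "y*x = 1" "q*q' = 1" "q'*q = 1"
  have "(p*x*q)*(q'*y*p') = p*(x*(q*q')*y)*p'" "(q'*y*p')*(p*x*q) = q'*(y*(p'*p)*x)*q"
    by (simp_all add: mult.assoc)
  thus ?thesis using h by simp
qed

lemma shift_inverse_ids:
  fixes a ai xa :: "'a::ring_1"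
  assumes a1: "a*ai = 1" and a2: "ai*a = 1" and xa1: "(a-1)*xa = 1" and xa2: "xa*(a-1) = 1"
  shows "a*ai = 1" "ai*a = 1" "a*(ai*z) = z" "ai*(a*z) = z"
    "a*xa = 1 + xa" "xa*a = 1 + xa" "a*(xa*z) = z + xa*z" "xa*(a*z) = z + xa*z"
    "xa*ai = xa - ai" "ai*xa = xa - ai" "xa*(ai*z) = xa*z - ai*z" "ai*(xa*z) = xa*z - ai*z"
proof -
  show "a*ai = 1" "ai*a = 1" by (fact a1, fact a2)
  show "a*(ai*z) = z" "ai*(a*z) = z" using mult_assoc_eq[OF a1] mult_assoc_eq[OF a2] by simp_all
  show B: "a*xa = 1 + xa" "xa*a = 1 + xa" using xa1 xa2 by (simp_all add: algebra_simps)
  show "a*(xa*z) = z + xa*z" "xa*(a*z) = z + xa*z"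
    using mult_assoc_eq[OF B(1)] mult_assoc_eq[OF B(2)] by (simp_all add: algebra_simps)
  have "xa - ai = xa*(a*ai) - (xa*(a-1))*ai" by (simp add: a1 xa2)
  also have "\<dots> = xa*ai" by (simp add: algebra_simps)
  finally show C: "xa*ai = xa - ai" by simp
  have "xa - ai = (ai*a)*xa - ai*((a-1)*xa)" by (simp add: a2 xa1)
  also have "\<dots> = ai*xa" by (simp add: algebra_simps)
  finally show C': "ai*xa = xa - ai" by simp
  show "xa*(ai*z) = xa*z - ai*z" "ai*(xa*z) = xa*z - ai*z"
    using mult_assoc_eq[OF C] mult_assoc_eq[OF C'] by (simp_all add: algebra_simps)
qed

lemma difference_inverse_ids:
  fixes x y u :: "'a::ring_1"
  assumes u1: "(y-x)*u = 1" and u2: "u*(y-x) = 1"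
  shows "y*u = 1 + x*u" "u*y = 1 + u*x" "y*(u*z) = z + x*(u*z)" "u*(y*z) = z + u*(x*z)"
proof -
  show A: "y*u = 1 + x*u" "u*y = 1 + u*x" using u1 u2 by (simp_all add: algebra_simps)
  show "y*(u*z) = z + x*(u*z)" "u*(y*z) = z + u*(x*z)"
    using mult_assoc_eq[OF A(1), of z] mult_assoc_eq[OF A(2), of z] by (simp_all add: algebra_simps)
qed

lemma eq_zero_by_diff: "(x::'a::ab_group_add) = y - z \<Longrightarrow> y = 0 \<Longrightarrow> z = 0 \<Longrightarrow> x = 0"
  by simp

lemma mat3_nth:
  "mat3 a11 a12 a13 a21 a22 a23 a31 a32 a33 $ 1 $ 1 = a11"
  "mat3 a11 a12 a13 a21 a22 a23 a31 a32 a33 $ 1 $ 2 = a12"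
  "mat3 a11 a12 a13 a21 a22 a23 a31 a32 a33 $ 1 $ 3 = a13"
  "mat3 a11 a12 a13 a21 a22 a23 a31 a32 a33 $ 2 $ 1 = a21"
  "mat3 a11 a12 a13 a21 a22 a23 a31 a32 a33 $ 2 $ 2 = a22"
  "mat3 a11 a12 a13 a21 a22 a23 a31 a32 a33 $ 2 $ 3 = a23"
  "mat3 a11 a12 a13 a21 a22 a23 a31 a32 a33 $ 3 $ 1 = a31"
  "mat3 a11 a12 a13 a21 a22 a23 a31 a32 a33 $ 3 $ 2 = a32"
  "mat3 a11 a12 a13 a21 a22 a23 a31 a32 a33 $ 3 $ 3 = a33"
  by (simp_all add: mat3_def)

lemma mat3_expand:
  "(M::'a^3^3) = mat3 (M$1$1) (M$1$2) (M$1$3) (M$2$1) (M$2$2) (M$2$3) (M$3$1) (M$3$2) (M$3$3)"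
  unfolding vec_eq_iff forall_3 by (simp add: mat3_nth)

lemma mat3_eq_iff:
  "mat3 a11 a12 a13 a21 a22 a23 a31 a32 a33 = mat3 b11 b12 b13 b21 b22 b23 b31 b32 b33 \<longleftrightarrow>
   a11 = b11 \<and> a12 = b12 \<and> a13 = b13 \<and> a21 = b21 \<and> a22 = b22 \<and> a23 = b23 \<and> a31 = b31 \<and> a32 = b32 \<and> a33 = b33"
  by (metis mat3_nth)

lemma mat3_mult:
  "mat3 a11 a12 a13 a21 a22 a23 a31 a32 a33 ** mat3 b11 b12 b13 b21 b22 b23 b31 b32 b33 =
   mat3 (a11*b11+a12*b21+a13*b31) (a11*b12+a12*b22+a13*b32) (a11*b13+a12*b23+a13*b33)
        (a21*b11+a22*b21+a23*b31) (a21*b12+a22*b22+a23*b32) (a21*b13+a22*b23+a23*b33)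
        (a31*b11+a32*b21+a33*b31) (a31*b12+a32*b22+a33*b32) (a31*b13+a32*b23+a33*b33)"
  unfolding vec_eq_iff forall_3 by (simp add: mat3_nth matrix_matrix_mult_def sum_3)

lemma mat_one_mat3: "(mat 1 :: 'a::ring_1^3^3) = mat3 1 0 0 0 1 0 0 0 1"
  unfolding vec_eq_iff forall_3 by (simp add: mat3_nth mat_def)

lemma J2_mat3: "J2 (mat3 x11 x12 x13 x21 x22 x23 x31 x32 x33) =
  mat3 (rinv x11) (rinv x21) (rinv x31) (rinv x12) (rinv x22) (rinv x32) (rinv x13) (rinv x23) (rinv x33)"
  unfolding J2_def by (subst mat3_expand) (simp add: mat3_nth)

lemma LambdaL_mat3: "LambdaL (mat3 x11 x12 x13 x21 x22 x23 x31 x32 x33) = mat3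
  (x11*rinv x11*x11*rinv x11) (x11*rinv x11*x12*rinv x12) (x11*rinv x11*x13*rinv x13)
  (x11*rinv x21*x21*rinv x11) (x11*rinv x21*x22*rinv x12) (x11*rinv x21*x23*rinv x13)
  (x11*rinv x31*x31*rinv x11) (x11*rinv x31*x32*rinv x12) (x11*rinv x31*x33*rinv x13)"
  unfolding LambdaL_def by (subst mat3_expand) (simp add: mat3_nth)

lemma LambdaR_mat3: "LambdaR (mat3 x11 x12 x13 x21 x22 x23 x31 x32 x33) = mat3
  (rinv x11*x11*rinv x11*x11) (rinv x11*x12*rinv x12*x11) (rinv x11*x13*rinv x13*x11)
  (rinv x21*x21*rinv x11*x11) (rinv x21*x22*rinv x12*x11) (rinv x21*x23*rinv x13*x11)
  (rinv x31*x31*rinv x11*x11) (rinv x31*x32*rinv x12*x11) (rinv x31*x33*rinv x13*x11)"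
  unfolding LambdaR_def by (subst mat3_expand) (simp add: mat3_nth)

lemma conj_mat_mat3: "conj_mat w (mat3 x11 x12 x13 x21 x22 x23 x31 x32 x33) = mat3
  (rinv w*x11*w) (rinv w*x12*w) (rinv w*x13*w) (rinv w*x21*w) (rinv w*x22*w) (rinv w*x23*w)
  (rinv w*x31*w) (rinv w*x32*w) (rinv w*x33*w)"
  unfolding conj_mat_def by (subst mat3_expand) (simp add: mat3_nth)

lemma minvertible_minv_eq:
  "M ** N = mat 1 \<Longrightarrow> N ** M = mat 1 \<Longrightarrow> minvertible M \<and> minv M = (N::'a::ring_1^3^3)"
proof -
  assume h: "M ** N = mat 1" "N ** M = mat 1"
  have "N' = N" if "M ** N' = mat 1 \<and> N' ** M = mat 1" for N'
  proof -
    have "N' = N' ** (M ** N)" "N' ** M = mat 1" using h that by simp_all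
    thus "N' = N" by (simp add: matrix_mul_assoc)
  qed
  thus ?thesis using h unfolding minvertible_def minv_def by (metis (mono_tags, lifting) the_equality)
qed

definition diag3 :: "'a::ring_1 \<Rightarrow> 'a \<Rightarrow> 'a \<Rightarrow> 'a^3^3" where
  "diag3 a b c = mat3 a 0 0 0 b 0 0 0 c"

lemma diag3_mult: "diag3 a b c ** diag3 a' b' c' = diag3 (a*a') (b*b') (c*c')"
  unfolding diag3_def by (simp add: mat3_mult)

lemma diag3_inverse: "is_unit a \<Longrightarrow> is_unit b \<Longrightarrow> is_unit c \<Longrightarrow>
  diag3 a b c ** diag3 (rinv a) (rinv b) (rinv c) = mat 1 \<and> diag3 (rinv a) (rinv b) (rinv c) ** diag3 a b c = mat 1"
  unfolding diag3_mult unfolding diag3_def mat_one_mat3 mat3_eq_iff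
  using rinv_inverse[of a] rinv_inverse[of b] rinv_inverse[of c] by simp

section \<open>Invertible minors and Schur complements\<close>

lemma sub_invertible_singleton_unit: "sub_invertible M {j} {k} \<Longrightarrow> is_unit (M$j$k)"
  unfolding sub_invertible_def is_unit_def by auto

lemma sub_invertible_UNIV_minvertible: "sub_invertible M UNIV UNIV \<Longrightarrow> minvertible M"
  unfolding sub_invertible_def minvertible_def matrix_matrix_mult_def mat_def vec_eq_iff by auto

lemma schur_complement_unit:
  fixes ma mb mc md na nb nc nd :: "'a::ring_1"
  assumes "ma*na + mb*nc = 1" "ma*nb + mb*nd = 0" "mc*na + md*nc = 0" "mc*nb + md*nd = 1"
    "na*ma + nb*mc = 1" "na*mb + nb*md = 0" "nc*ma + nd*mc = 0" "nc*mb + nd*md = 1" and u: "is_unit ma"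
  shows "is_unit (md - mc*rinv ma*mb)"
proof (rule is_unitI)
  note U = rinv_inverse[OF u]
  have nb: "nb = -(rinv ma*mb*nd)"
  proof -
    have "nb = rinv ma*(ma*nb)" using U by (simp add: mult.assoc[symmetric])
    also have "ma*nb = -(mb*nd)" using assms(2) by (simp add: eq_neg_iff_add_eq_0)
    finally show ?thesis by (simp add: mult.assoc)
  qed
  have nc: "nc = -(nd*mc*rinv ma)"
  proof -
    have "nc = (nc*ma)*rinv ma" using U by (simp add: mult.assoc)
    also have "nc*ma = -(nd*mc)" using assms(7) by (simp add: eq_neg_iff_add_eq_0)
    finally show ?thesis by (simp add: mult.assoc)
  qed
  show "(md - mc*rinv ma*mb)*nd = 1" using assms(4) unfolding nb by (simp add: algebra_simps)
  show "nd*(md - mc*rinv ma*mb) = 1" using assms(8) unfolding nc by (simp add: algebra_simps)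
qed

lemma sub_invertible_schur_unit:
  assumes "sub_invertible M {i1,i2} {k1,k2}" "i1 \<noteq> i2" "k1 \<noteq> k2" "is_unit (M$i1$k1)"
  shows "is_unit (M$i2$k2 - M$i2$k1 * rinv (M$i1$k1) * M$i1$k2)"
proof -
  obtain N :: "'a::ring_1^3^3" where
    "\<forall>i\<in>{i1,i2}. \<forall>i'\<in>{i1,i2}. (\<Sum>k\<in>{k1,k2}. M$i$k * N$k$i') = (if i = i' then 1 else 0)"
    "\<forall>k\<in>{k1,k2}. \<forall>k'\<in>{k1,k2}. (\<Sum>i\<in>{i1,i2}. N$k$i * M$i$k') = (if k = k' then 1 else 0)"
    using assms(1) unfolding sub_invertible_def by blast
  then show ?thesis
    by (intro schur_complement_unit[where na="N$k1$i1" and nb="N$k1$i2" and nc="N$k2$i1" and nd="N$k2$i2"])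
      (use assms in auto)
qed

text \<open>Eliminating the first row and column of an invertible matrix of the shape \<open>mat3 1 1 1 1 a b 1 c d\<close>
  leaves an invertible \<open>2\<times>2\<close> block with entries \<open>a-1, b-1, c-1, d-1\<close>.\<close>

lemma normalized_schur_unit:
  fixes a b c d :: "'a::ring_1"
  assumes h: "mat3 1 1 1 1 a b 1 c d ** N = mat 1" "N ** mat3 1 1 1 1 a b 1 c d = mat 1"
    and u: "is_unit (a-1)"
  shows "is_unit ((d-1) - (c-1)*rinv (a-1)*(b-1))"
proof -
  obtain n11 n12 n13 n21 n22 n23 n31 n32 n33 where N: "N = mat3 n11 n12 n13 n21 n22 n23 n31 n32 n33"
    using mat3_expand by blast
  from h have e: "n12 + n22 + n32 = 0" "n13 + n23 + n33 = 0" "n21 + n22 + n23 = 0" "n31 + n32 + n33 = 0"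
    "n12 + a*n22 + b*n32 = 1" "n13 + a*n23 + b*n33 = 0" "n12 + c*n22 + d*n32 = 0" "n13 + c*n23 + d*n33 = 1"
    "n21 + n22*a + n23*c = 1" "n31 + n32*a + n33*c = 0" "n21 + n22*b + n23*d = 0" "n31 + n32*b + n33*d = 1"
    unfolding N mat3_mult mat_one_mat3 mat3_eq_iff by simp_all
  have n1: "n12 = -(n22+n32)" "n13 = -(n23+n33)" "n21 = -(n22+n23)" "n31 = -(n32+n33)"
    using e(1-4) by (simp_all add: add.assoc add_eq_0_iff2)
  show ?thesis
    by (rule schur_complement_unit[where na=n22 and nb=n23 and nc=n32 and nd=n33])
      (use e(5-12) u in \<open>simp_all add: n1 algebra_simps\<close>)
qed

section \<open>Computing \<open>\<Phi>\<^sup>2\<close> from a diagonal relation between \<open>J\<^sub>2\<close>-images\<close>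

text \<open>Here \<open>X\<close> and \<open>Y\<close> play the roles of \<open>A\<^sup>-\<^sup>1\<close> and \<open>(J\<^sub>2 A)\<^sup>-\<^sup>1\<close>. The two hypotheses say that
  \<open>J\<^sub>2 X\<close> has an explicit right and left inverse built from \<open>J\<^sub>2 Y\<close> and diagonal factors.\<close>

locale J2_diagonal_pair =
  fixes x11 x12 x13 x21 x22 x23 x31 x32 x33 y11 y12 y13 y21 y22 y23 y31 y32 y33
    k1 k2 k3 l1 l2 l3 r1 r2 r3 w1 w2 w3 :: "'a::ring_1"
  assumes ux: "is_unit x11" "is_unit x12" "is_unit x13" "is_unit x21" "is_unit x22" "is_unit x23"
      "is_unit x31" "is_unit x32" "is_unit x33"
    and uy: "is_unit y11" "is_unit y12" "is_unit y13" "is_unit y21" "is_unit y22" "is_unit y23"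
      "is_unit y31" "is_unit y32" "is_unit y33"
    and uk: "is_unit k1" "is_unit k2" "is_unit k3"
    and ul: "is_unit l1" "is_unit l2" "is_unit l3"
    and ur3: "is_unit r3" and uw3: "is_unit w3"
    and XY: "J2 (mat3 x11 x12 x13 x21 x22 x23 x31 x32 x33) **
      (diag3 k1 k2 k3 ** J2 (mat3 y11 y12 y13 y21 y22 y23 y31 y32 y33)) = diag3 r1 r2 r3"
    and YX: "J2 (mat3 y11 y12 y13 y21 y22 y23 y31 y32 y33) **
      (diag3 l1 l2 l3 ** J2 (mat3 x11 x12 x13 x21 x22 x23 x31 x32 x33)) = diag3 w1 w2 w3"
begin

abbreviation "X \<equiv> mat3 x11 x12 x13 x21 x22 x23 x31 x32 x33"
abbreviation "Y \<equiv> mat3 y11 y12 y13 y21 y22 y23 y31 y32 y33"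

text \<open>Comparing the entries of \<open>diag r \<cdot> diag l \<cdot> J\<^sub>2 X = J\<^sub>2 X \<cdot> diag k \<cdot> diag w\<close>
  in the positions (1,3), (2,3), (3,1), (3,2).\<close>

lemma diag_units: "is_unit r1" "is_unit r2" "is_unit w1" "is_unit w2"
proof -
  have "diag3 r1 r2 r3 ** (diag3 l1 l2 l3 ** J2 X) = J2 X ** (diag3 k1 k2 k3 ** diag3 w1 w2 w3)"
    unfolding XY[symmetric] YX[symmetric] by (simp add: matrix_mul_assoc)
  hence e: "r1*(l1*rinv x31) = rinv x31*(k3*w3)" "r2*(l2*rinv x32) = rinv x32*(k3*w3)"
      "r3*(l3*rinv x13) = rinv x13*(k1*w1)" "r3*(l3*rinv x23) = rinv x23*(k2*w2)"
    unfolding J2_mat3 diag3_def mat3_mult mat3_eq_iff by simp_all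
  show "is_unit r1"
    by (rule is_unit_cancel_right[OF e(1)]) (intro is_unit_mult is_unit_rinv ux uk ul uw3)+
  show "is_unit r2"
    by (rule is_unit_cancel_right[OF e(2)]) (intro is_unit_mult is_unit_rinv ux uk ul uw3)+
  show "is_unit w1"
    by (rule is_unit_cancel_left[of "rinv x13 * k1" w1 "r3*(l3*rinv x13)"])
      (use e(3) in \<open>simp add: mult.assoc\<close>, (intro is_unit_mult is_unit_rinv ux uk ul ur3)+)
  show "is_unit w2"
    by (rule is_unit_cancel_left[of "rinv x23 * k2" w2 "r3*(l3*rinv x23)"])
      (use e(4) in \<open>simp add: mult.assoc\<close>, (intro is_unit_mult is_unit_rinv ux uk ul ur3)+)
qed

abbreviation "J2X_inv \<equiv> diag3 k1 k2 k3 ** J2 Y ** diag3 (rinv r1) (rinv r2) (rinv r3)"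

lemma J2X_inverse: "J2 X ** J2X_inv = mat 1" "J2X_inv ** J2 X = mat 1"
proof -
  have R: "diag3 r1 r2 r3 ** diag3 (rinv r1) (rinv r2) (rinv r3) = mat 1"
    using diag3_inverse[OF diag_units(1,2) ur3] by simp
  have W: "diag3 (rinv w1) (rinv w2) (rinv w3) ** diag3 w1 w2 w3 = mat 1"
    using diag3_inverse[OF diag_units(3,4) uw3] by simp
  have "J2 X ** J2X_inv = (J2 X ** (diag3 k1 k2 k3 ** J2 Y)) ** diag3 (rinv r1) (rinv r2) (rinv r3)"
    by (simp add: matrix_mul_assoc)
  thus right: "J2 X ** J2X_inv = mat 1" unfolding XY R .
  define L where "L = diag3 (rinv w1) (rinv w2) (rinv w3) ** (J2 Y ** diag3 l1 l2 l3)"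
  have "L ** J2 X = diag3 (rinv w1) (rinv w2) (rinv w3) ** (J2 Y ** (diag3 l1 l2 l3 ** J2 X))"
    unfolding L_def by (simp add: matrix_mul_assoc)
  hence left: "L ** J2 X = mat 1" unfolding YX W .
  have "J2X_inv = (L ** J2 X) ** J2X_inv" unfolding left by simp
  also have "\<dots> = L ** (J2 X ** J2X_inv)" by (simp add: matrix_mul_assoc)
  also have "\<dots> = L" unfolding right by simp
  finally show "J2X_inv ** J2 X = mat 1" using left by simp
qed

abbreviation "DL \<equiv> diag3 x11 x12 x13"
abbreviation "DLi \<equiv> diag3 (rinv x11) (rinv x12) (rinv x13)"
abbreviation "DR \<equiv> diag3 (x11*rinv x11) (x21*rinv x11) (x31*rinv x11)"
abbreviation "DRi \<equiv> diag3 (rinv (x11*rinv x11)) (rinv (x21*rinv x11)) (rinv (x31*rinv x11))"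

lemma J2_LambdaL_eq: "J2 (LambdaL X) = DL ** J2 X ** DR"
  unfolding LambdaL_mat3 J2_mat3 diag3_def mat3_mult
  by (simp only: rinv_cross_ratio ux) (simp add: mult.assoc)

abbreviation "J2_LambdaL_inv \<equiv> DRi ** J2X_inv ** DLi"

lemma J2_LambdaL_inverse: "J2 (LambdaL X) ** J2_LambdaL_inv = mat 1" "J2_LambdaL_inv ** J2 (LambdaL X) = mat 1"
proof -
  have uDL: "DL ** DLi = mat 1" "DLi ** DL = mat 1" using diag3_inverse[OF ux(1,2,3)] by simp_all
  have "is_unit (x11*rinv x11)" "is_unit (x21*rinv x11)" "is_unit (x31*rinv x11)"
    by (intro is_unit_mult is_unit_rinv ux)+
  then have uDR: "DR ** DRi = mat 1" "DRi ** DR = mat 1" using diag3_inverse by blast+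
  have "J2 (LambdaL X) ** J2_LambdaL_inv = DL ** (J2 X ** ((DR ** DRi) ** (J2X_inv ** DLi)))"
    unfolding J2_LambdaL_eq by (simp add: matrix_mul_assoc)
  also have "\<dots> = DL ** ((J2 X ** J2X_inv) ** DLi)" unfolding uDR by (simp add: matrix_mul_assoc)
  also have "\<dots> = mat 1" unfolding J2X_inverse by (simp add: uDL)
  finally show "J2 (LambdaL X) ** J2_LambdaL_inv = mat 1" .
  have "J2_LambdaL_inv ** J2 (LambdaL X) = DRi ** ((J2X_inv ** ((DLi ** DL) ** J2 X)) ** DR)"
    unfolding J2_LambdaL_eq by (simp add: matrix_mul_assoc)
  also have "\<dots> = DRi ** ((J2X_inv ** J2 X) ** DR)" unfolding uDL by (simp add: matrix_mul_assoc)
  also have "\<dots> = mat 1" unfolding J2X_inverse by (simp add: uDR)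
  finally show "J2_LambdaL_inv ** J2 (LambdaL X) = mat 1" .
qed

lemma J2_LambdaL_inv_mat3: "J2_LambdaL_inv = mat3
  ((rinv (x11*rinv x11)*k1)*rinv y11*(rinv r1*rinv x11))
  ((rinv (x11*rinv x11)*k1)*rinv y21*(rinv r2*rinv x12))
  ((rinv (x11*rinv x11)*k1)*rinv y31*(rinv r3*rinv x13))
  ((rinv (x21*rinv x11)*k2)*rinv y12*(rinv r1*rinv x11))
  ((rinv (x21*rinv x11)*k2)*rinv y22*(rinv r2*rinv x12))
  ((rinv (x21*rinv x11)*k2)*rinv y32*(rinv r3*rinv x13))
  ((rinv (x31*rinv x11)*k3)*rinv y13*(rinv r1*rinv x11))
  ((rinv (x31*rinv x11)*k3)*rinv y23*(rinv r2*rinv x12))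
  ((rinv (x31*rinv x11)*k3)*rinv y33*(rinv r3*rinv x13))"
  unfolding diag3_def J2_mat3 mat3_mult by (simp add: mult.assoc)

lemma J2_LambdaL_inv_factor_units:
  "is_unit (rinv (x11*rinv x11)*k1)" "is_unit (rinv (x21*rinv x11)*k2)" "is_unit (rinv (x31*rinv x11)*k3)"
  "is_unit (rinv r1*rinv x11)" "is_unit (rinv r2*rinv x12)" "is_unit (rinv r3*rinv x13)"
  by (intro is_unit_mult is_unit_rinv ux uk ur3 diag_units)+

text \<open>In the last claim the row factors of \<open>J2_LambdaL_inv\<close> cancel in the cross ratios taken by
  \<open>\<Lambda>\<^sup>L\<close>, except for \<open>k1\<close>, which survives as a conjugation.\<close>

lemma Phi_square_conj:
  "minvertible (J2 (LambdaL X))"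
  "all_units (minv (J2 (LambdaL X)))"
  "hat (J2 (LambdaL X))"
  "all_units (J2 (LambdaL X))"
  "J2 (LambdaL (minv (J2 (LambdaL X)))) = conj_mat (rinv k1) (LambdaR Y)"
proof -
  note M = minvertible_minv_eq[OF J2_LambdaL_inverse]
  show "minvertible (J2 (LambdaL X))" using M by simp
  have minv_eq: "minv (J2 (LambdaL X)) = J2_LambdaL_inv" using M by simp
  note U = J2_LambdaL_inv_factor_units is_unit_mult is_unit_rinv uy
  show "all_units (minv (J2 (LambdaL X)))"
    unfolding minv_eq J2_LambdaL_inv_mat3 all_units_def forall_3 by (simp add: mat3_nth U)
  have T: "J2 (LambdaL X) = mat3
     (x11*rinv x11*x11*rinv x11) (x11*rinv x21*x21*rinv x11) (x11*rinv x31*x31*rinv x11)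
     (x12*rinv x12*x11*rinv x11) (x12*rinv x22*x21*rinv x11) (x12*rinv x32*x31*rinv x11)
     (x13*rinv x13*x11*rinv x11) (x13*rinv x23*x21*rinv x11) (x13*rinv x33*x31*rinv x11)"
    unfolding LambdaL_mat3 J2_mat3 by (simp only: rinv_cross_ratio ux)
  have one: "\<And>x y. is_unit x \<Longrightarrow> is_unit y \<Longrightarrow> x*rinv x*y*rinv y = 1"
     "\<And>x y. is_unit x \<Longrightarrow> is_unit y \<Longrightarrow> y*rinv x*x*rinv y = 1"
    by (simp_all add: mult.assoc rinv_mult_cancel rinv_inverse)
  show "hat (J2 (LambdaL X))" unfolding T hat_def forall_3 by (simp add: mat3_nth one ux rinv_inverse)
  show "all_units (J2 (LambdaL X))" unfolding T all_units_def forall_3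
    by (simp add: mat3_nth is_unit_mult is_unit_rinv ux)
  have k1: "rinv (x11*rinv x11)*k1 = k1" by (simp add: rinv_inverse[OF ux(1)] rinv_one)
  show "J2 (LambdaL (minv (J2 (LambdaL X)))) = conj_mat (rinv k1) (LambdaR Y)"
    unfolding minv_eq unfolding J2_LambdaL_inv_mat3 unfolding LambdaL_mat3 J2_mat3 LambdaR_mat3 conj_mat_mat3
    by (simp only: rinv_cross_ratio U, simp only: cross_ratio_rescale U, simp only: k1 rinv_rinv uk uy)
qed

end

section \<open>The inverse of a normalized matrix\<close>

text \<open>The matrix is \<open>A = mat3 1 1 1 1 a b 1 c d\<close>. All inverses that the computation needs are
  carried as parameters: \<open>ai\<close> inverts \<open>a\<close>, \<open>xa\<close> inverts \<open>a - 1\<close>, \<open>uba\<close> inverts \<open>b - a\<close>, \<open>ysg\<close>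
  inverts \<open>d - c a\<^sup>-\<^sup>1 b\<close>, and \<open>t\<close>, \<open>tp\<close> invert the Schur complements of the \<open>(1,1)\<close> entry in
  \<open>A\<close> and in \<open>J\<^sub>2 A = mat3 1 1 1 1 ai ci 1 bi di\<close>, after elimination of the first row and column.\<close>

locale normalized_units =
  fixes a b c d ai bi ci di xa xb xc xd uba uca udb udc ysg t tp :: "'a::ring_1"
  assumes a1: "a*ai = 1" and a2: "ai*a = 1"
    and b1: "b*bi = 1" and b2: "bi*b = 1"
    and c1: "c*ci = 1" and c2: "ci*c = 1"
    and d1: "d*di = 1" and d2: "di*d = 1"
    and xa1: "(a-1)*xa = 1" and xa2: "xa*(a-1) = 1"
    and xb1: "(b-1)*xb = 1" and xb2: "xb*(b-1) = 1"
    and xc1: "(c-1)*xc = 1" and xc2: "xc*(c-1) = 1"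
    and xd1: "(d-1)*xd = 1" and xd2: "xd*(d-1) = 1"
    and uba1: "(b-a)*uba = 1" and uba2: "uba*(b-a) = 1"
    and uca1: "(c-a)*uca = 1" and uca2: "uca*(c-a) = 1"
    and udb1: "(d-b)*udb = 1" and udb2: "udb*(d-b) = 1"
    and udc1: "(d-c)*udc = 1" and udc2: "udc*(d-c) = 1"
    and sg1: "(d - c*ai*b)*ysg = 1" and sg2: "ysg*(d - c*ai*b) = 1"
    and t1: "((d-1) - (c-1)*xa*(b-1))*t = 1" and t2: "t*((d-1) - (c-1)*xa*(b-1)) = 1"
    and tp1: "((di-1) + (bi-1)*xa*a*(ci-1))*tp = 1" and tp2: "tp*((di-1) + (bi-1)*xa*a*(ci-1)) = 1"
begin

lemmas a_ids = shift_inverse_ids[OF a1 a2 xa1 xa2]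
lemmas b_ids = shift_inverse_ids[OF b1 b2 xb1 xb2]
lemmas c_ids = shift_inverse_ids[OF c1 c2 xc1 xc2]
lemmas d_ids = shift_inverse_ids[OF d1 d2 xd1 xd2]
lemmas abcd_ids = a_ids b_ids c_ids d_ids

lemmas uba_ids = difference_inverse_ids[OF uba1 uba2]
lemmas uca_ids = difference_inverse_ids[OF uca1 uca2]
lemmas udb_ids = difference_inverse_ids[OF udb1 udb2]

lemma ysg_inverse: "(d - c*(ai*b))*ysg = 1" "ysg*(d - c*(ai*b)) = 1"
  using sg1 sg2 by (simp_all add: mult.assoc)

lemmas inverse_cancels =
  mult_inverse_cancel[OF uba1] mult_inverse_cancel[OF uba2] mult_inverse_cancel[OF uca1]
  mult_inverse_cancel[OF uca2] mult_inverse_cancel[OF udb1] mult_inverse_cancel[OF udb2]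
  mult_inverse_cancel[OF udc1] mult_inverse_cancel[OF udc2]
  mult_inverse_cancel[OF ysg_inverse(1)] mult_inverse_cancel[OF ysg_inverse(2)]
  uba1 uba2 uca1 uca2 udb1 udb2 udc1 udc2 ysg_inverse

lemma t_ids:
  "d*t = 1 + t + c*(xa*(b*t)) - c*(xa*t) - xa*(b*t) + xa*t"
  "t*d = 1 + t + t*(c*(xa*b)) - t*(c*xa) - t*(xa*b) + t*xa"
  "d*(t*z) = z + t*z + c*(xa*(b*(t*z))) - c*(xa*(t*z)) - xa*(b*(t*z)) + xa*(t*z)"
  "t*(d*z) = z + t*z + t*(c*(xa*(b*z))) - t*(c*(xa*z)) - t*(xa*(b*z)) + t*(xa*z)"
proof -
  show A: "d*t = 1 + t + c*(xa*(b*t)) - c*(xa*t) - xa*(b*t) + xa*t"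
    using t1 by (simp add: algebra_simps)
  show B: "t*d = 1 + t + t*(c*(xa*b)) - t*(c*xa) - t*(xa*b) + t*xa"
    using t2 by (simp add: algebra_simps)
  show "d*(t*z) = z + t*z + c*(xa*(b*(t*z))) - c*(xa*(t*z)) - xa*(b*(t*z)) + xa*(t*z)"
    using mult_assoc_eq[OF A, of z] by (simp add: algebra_simps)
  show "t*(d*z) = z + t*z + t*(c*(xa*(b*z))) - t*(c*(xa*z)) - t*(xa*(b*z)) + t*(xa*z)"
    using mult_assoc_eq[OF B, of z] by (simp add: algebra_simps)
qed

text \<open>The entries \<open>B\<^sub>j\<^sub>k\<close> of \<open>A\<^sup>-\<^sup>1\<close> (with \<open>B\<^sub>3\<^sub>3 = t\<close>): the lower right block is the block inverse of
  \<open>[[a-1, b-1], [c-1, d-1]]\<close>, the rest is determined by the zero row and column sums.\<close>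

definition "B22 = xa + xa*(b-1)*t*(c-1)*xa"
definition "B23 = - (xa*(b-1)*t)"
definition "B32 = - (t*(c-1)*xa)"
definition "B11 = 1 + B22 + B23 + B32 + t"
definition "B12 = - (B22 + B32)"
definition "B13 = - (B23 + t)"
definition "B21 = - (B22 + B23)"
definition "B31 = - (B32 + t)"

lemma inv_eqs:
  "B11 + B21 + B31 = 1" "B12 + B22 + B32 = 0" "B13 + B23 + t = 0"
  "B11 + a*B21 + b*B31 = 0" "B12 + a*B22 + b*B32 = 1" "B13 + a*B23 + b*t = 0"
  "B11 + c*B21 + d*B31 = 0" "B12 + c*B22 + d*B32 = 0" "B13 + c*B23 + d*t = 1"
  "B11 + B12 + B13 = 1" "B21 + B22 + B23 = 0" "B31 + B32 + t = 0"
  "B11 + B12*a + B13*c = 0" "B21 + B22*a + B23*c = 1" "B31 + B32*a + t*c = 0"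
  "B11 + B12*b + B13*d = 0" "B21 + B22*b + B23*d = 0" "B31 + B32*b + t*d = 1"
  unfolding B11_def B12_def B13_def B21_def B31_def B22_def B23_def B32_def
  by (simp_all add: algebra_simps abcd_ids t_ids)

lemma mat3_inverse: "mat3 1 1 1 1 a b 1 c d ** mat3 B11 B12 B13 B21 B22 B23 B31 B32 t = mat 1"
  "mat3 B11 B12 B13 B21 B22 B23 B31 B32 t ** mat3 1 1 1 1 a b 1 c d = mat 1"
  unfolding mat3_mult mat_one_mat3 mat3_eq_iff using inv_eqs by simp_all

lemma B22_eq: "B22 = xc*(d-1)*t*(c-1)*xa"
proof -
  have "xc*(d-1)*t*(c-1)*xa = xc*((c-1)*B22)" unfolding B22_def
    by (simp add: algebra_simps abcd_ids t_ids)
  also have "\<dots> = B22" by (simp add: mult.assoc[symmetric] xc2)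
  finally show ?thesis by simp
qed

lemma B12_eq: "B12 = - (xc*(d-c)*t*(c-1)*xa)"
  unfolding B12_def B32_def B22_eq by (simp add: algebra_simps abcd_ids)

lemma B13_eq: "B13 = xa*(b-a)*t"
  unfolding B13_def B23_def by (simp add: algebra_simps abcd_ids)

lemma B31_eq: "B31 = t*(c-a)*xa"
  unfolding B31_def B32_def by (simp add: algebra_simps abcd_ids)

lemma B21_eq: "B21 = - (uca*(d-b)*t*(c-a)*xa)"
proof -
  have "(c-a)*B21 = - ((d-b)*t*(c-a)*xa)"
    unfolding B21_def B22_def B23_def by (simp add: algebra_simps abcd_ids t_ids)
  hence "uca*((c-a)*B21) = - (uca*(d-b)*t*(c-a)*xa)" by (simp add: mult.assoc)
  thus ?thesis by (simp add: mult.assoc[symmetric] uca2)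
qed

lemma B11_eq: "B11 = a*uca*(d - c*ai*b)*t*(c-a)*xa"
proof -
  have "(c-a)*(ai*B11) = (d - c*ai*b)*t*(c-a)*xa"
    unfolding B11_def B22_def B23_def B32_def by (simp add: algebra_simps abcd_ids t_ids)
  hence "a*(uca*((c-a)*(ai*B11))) = a*uca*(d - c*ai*b)*t*(c-a)*xa" by (simp add: mult.assoc)
  thus ?thesis by (simp add: mult.assoc[symmetric] uca2 a1)
qed

text \<open>\<open>J\<^sub>2 A\<close> is again normalized, with \<open>a, b, c, d\<close> replaced by \<open>a\<^sup>-\<^sup>1, c\<^sup>-\<^sup>1, b\<^sup>-\<^sup>1, d\<^sup>-\<^sup>1\<close>;
  the roles of \<open>t\<close> and \<open>tp\<close> are exchanged.\<close>

lemma dual_difference_inverses: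
  "(ci - ai)*(-(a*uca*c)) = 1" "(-(a*uca*c))*(ci - ai) = 1"
  "(bi - ai)*(-(a*uba*b)) = 1" "(-(a*uba*b))*(bi - ai) = 1"
  "(di - ci)*(-(c*udc*d)) = 1" "(-(c*udc*d))*(di - ci) = 1"
  "(di - bi)*(-(b*udb*d)) = 1" "(-(b*udb*d))*(di - bi) = 1"
  "(di - bi*a*ci)*(-(d*ysg*c*ai*b)) = 1" "(-(d*ysg*c*ai*b))*(di - bi*a*ci) = 1"
proof -
  have e1: "ci - ai = -(ci*(c-a)*ai)" by (simp add: algebra_simps abcd_ids)
  have e2: "bi - ai = -(bi*(b-a)*ai)" by (simp add: algebra_simps abcd_ids)
  have e3: "di - ci = -(di*(d-c)*ci)" by (simp add: algebra_simps abcd_ids)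
  have e4: "di - bi = -(di*(d-b)*bi)" by (simp add: algebra_simps abcd_ids)
  have e5: "di - bi*a*ci = -(bi*(a*ci)*(d - c*ai*b)*di)" by (simp add: algebra_simps abcd_ids)
  from mult3_inverse[OF c2 c1 uca1 uca2 a2 a1]
  show "(ci - ai)*(-(a*uca*c)) = 1" "(-(a*uca*c))*(ci - ai) = 1"
    unfolding e1 by (simp_all add: mult.assoc)
  from mult3_inverse[OF b2 b1 uba1 uba2 a2 a1]
  show "(bi - ai)*(-(a*uba*b)) = 1" "(-(a*uba*b))*(bi - ai) = 1"
    unfolding e2 by (simp_all add: mult.assoc)
  from mult3_inverse[OF d2 d1 udc1 udc2 c2 c1]
  show "(di - ci)*(-(c*udc*d)) = 1" "(-(c*udc*d))*(di - ci) = 1"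
    unfolding e3 by (simp_all add: mult.assoc)
  from mult3_inverse[OF d2 d1 udb1 udb2 b2 b1]
  show "(di - bi)*(-(b*udb*d)) = 1" "(-(b*udb*d))*(di - bi) = 1"
    unfolding e4 by (simp_all add: mult.assoc)
  have "(bi*(a*ci))*((c*ai)*b) = 1" "((c*ai)*b)*(bi*(a*ci)) = 1"
    by (simp_all add: mult.assoc abcd_ids)
  from mult3_inverse[OF this sg1 sg2 d2 d1]
  show "(di - bi*a*ci)*(-(d*ysg*c*ai*b)) = 1" "(-(d*ysg*c*ai*b))*(di - bi*a*ci) = 1"
    unfolding e5 by (simp_all add: mult.assoc)
qed

lemma dual_shift_inverses:
  "(ai-1)*(-(xa*a)) = 1" "(-(xa*a))*(ai-1) = 1"
  "(bi-1)*(-(xb*b)) = 1" "(-(xb*b))*(bi-1) = 1"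
  "(ci-1)*(-(xc*c)) = 1" "(-(xc*c))*(ci-1) = 1"
  "(di-1)*(-(xd*d)) = 1" "(-(xd*d))*(di-1) = 1"
  by (simp_all add: algebra_simps abcd_ids)

lemma dual_schur_inverses:
  "((di-1) - (bi-1)*(-(xa*a))*(ci-1))*tp = 1" "tp*((di-1) - (bi-1)*(-(xa*a))*(ci-1)) = 1"
  "((d-1) + (c-1)*(-(xa*a))*ai*(b-1))*t = 1" "t*((d-1) + (c-1)*(-(xa*a))*ai*(b-1)) = 1"
proof -
  have e: "(di-1) - (bi-1)*(-(xa*a))*(ci-1) = (di-1) + (bi-1)*xa*a*(ci-1)"
    by (simp add: mult.assoc)
  have f: "(d-1) + (c-1)*(-(xa*a))*ai*(b-1) = (d-1) - (c-1)*xa*(b-1)"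
    by (simp add: mult.assoc a_ids(3))
  show "((di-1) - (bi-1)*(-(xa*a))*(ci-1))*tp = 1" "tp*((di-1) - (bi-1)*(-(xa*a))*(ci-1)) = 1"
    unfolding e by (fact tp1, fact tp2)
  show "((d-1) + (c-1)*(-(xa*a))*ai*(b-1))*t = 1" "t*((d-1) + (c-1)*(-(xa*a))*ai*(b-1)) = 1"
    unfolding f by (fact t1, fact t2)
qed

lemma dual: "normalized_units ai ci bi di a c b d (-(xa*a)) (-(xc*c)) (-(xb*b)) (-(xd*d))
  (-(a*uca*c)) (-(a*uba*b)) (-(c*udc*d)) (-(b*udb*d)) (-(d*ysg*c*ai*b)) tp t"
  by unfold_locales
    (simp_all only: a1 a2 b1 b2 c1 c2 d1 d2 dual_difference_inverses dual_shift_inverses dual_schur_inverses)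

lemma double_dual_params:
  "-((-(xa*a))*ai) = xa" "-((-(xb*b))*bi) = xb" "-((-(xc*c))*ci) = xc" "-((-(xd*d))*di) = xd"
  "-(ai*(-(a*uba*b))*bi) = uba" "-(ai*(-(a*uca*c))*ci) = uca" "-(bi*(-(b*udb*d))*di) = udb"
  "-(ci*(-(c*udc*d))*di) = udc" "-(di*(-(d*ysg*c*ai*b))*bi*a*ci) = ysg"
  by (simp_all add: mult.assoc a_ids(1,3,4) b_ids(1,3,4) c_ids(1,3,4) d_ids(1,3,4))

lemma double_dual: "normalized_units a b c d ai bi ci di
  (-((-(xa*a))*ai)) (-((-(xb*b))*bi)) (-((-(xc*c))*ci)) (-((-(xd*d))*di))
  (-(ai*(-(a*uba*b))*bi)) (-(ai*(-(a*uca*c))*ci)) (-(bi*(-(b*udb*d))*di)) (-(ci*(-(c*udc*d))*di))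
  (-(di*(-(d*ysg*c*ai*b))*bi*a*ci)) t tp"
  unfolding double_dual_params by (rule normalized_units_axioms)

text \<open>With \<open>C = (J\<^sub>2 A)\<^sup>-\<^sup>1\<close>, the scalings \<open>k\<^sub>j = B\<^sub>j\<^sub>3 h\<^sub>j C\<^sub>3\<^sub>j\<close> are the ones that make
  \<open>J\<^sub>2(A\<^sup>-\<^sup>1) \<cdot> diag k \<cdot> J\<^sub>2 C\<close> diagonal; \<open>rA\<close> is the Schur complement of \<open>d\<close> in \<open>[[a, b], [c, d]]\<close>.\<close>

definition "rA = a - b*di*c"
definition "rAi = ai*b*ysg*d*bi"
definition "h1 = (d-c)*uba*rA*ci"
definition "h2 = -((d-b)*xb*(d-1)*di)"
definition "h3 = (c-a)*xa*(c-1)*ci"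

lemma rA_eq: "rA = b*di*(d - c*ai*b)*bi*a"
  unfolding rA_def by (simp add: algebra_simps abcd_ids)

lemma rA_inverse: "rA*rAi = 1" "rAi*rA = 1"
proof -
  have "(b*di*(d - c*ai*b)*bi*a)*(ai*b*ysg*d*bi) = b*di*((d - c*ai*b)*((bi*(a*ai)*b)*ysg))*d*bi"
    by (simp add: mult.assoc)
  also have "\<dots> = 1" by (simp add: abcd_ids inverse_cancels mult.assoc)
  finally show "rA*rAi = 1" unfolding rA_eq rAi_def .
  have "(ai*b*ysg*d*bi)*(b*di*(d - c*ai*b)*bi*a) = ai*b*(ysg*((d*(bi*b)*di)*(d - c*ai*b)))*bi*a"
    by (simp add: mult.assoc)
  also have "\<dots> = 1" by (simp add: abcd_ids inverse_cancels mult.assoc)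
  finally show "rAi*rA = 1" unfolding rA_eq rAi_def .
qed

lemma row1_eqs: "B12 = -(B13*(d-c)*uba)" "B13*((d-1) - (d-c)*uba*(b-1)) = -1"
proof -
  have "B12*(b-a) + B13*(d-c) = 0"
    by (rule eq_zero_by_diff[OF _ inv_eqs(16) inv_eqs(13)]) (simp add: algebra_simps)
  hence "(B12*(b-a) + B13*(d-c))*uba = 0" by simp
  hence "B12*(b-a)*uba = -(B13*(d-c))*uba" by (simp add: distrib_right eq_neg_iff_add_eq_0)
  thus B12: "B12 = -(B13*(d-c)*uba)" by (simp add: mult.assoc uba1)
  have "B12*(b-1) + B13*(d-1) + 1 = (B11 + B12*b + B13*d) - (B11 + B12 + B13) + 1"
    by (simp add: algebra_simps)
  also have "\<dots> = 0" using inv_eqs(16) inv_eqs(10) by simp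
  finally have "B12*(b-1) + B13*(d-1) + 1 = 0" .
  thus "B13*((d-1) - (d-c)*uba*(b-1)) = -1"
    unfolding B12 by (simp add: algebra_simps eq_neg_iff_add_eq_0)
qed

lemma row2_eqs: "B22 = -(B23*(d-1)*xb)" "B21 = B23*(d-b)*xb"
proof -
  have "B22*(b-1) + B23*(d-1) = 0"
    by (rule eq_zero_by_diff[OF _ inv_eqs(17) inv_eqs(11)]) (simp add: algebra_simps)
  hence "(B22*(b-1) + B23*(d-1))*xb = 0" by simp
  hence "B22*(b-1)*xb = -(B23*(d-1))*xb" by (simp add: distrib_right eq_neg_iff_add_eq_0)
  thus B22: "B22 = -(B23*(d-1)*xb)" by (simp add: mult.assoc xb1)
  have "B21 = -B22 - B23" using inv_eqs(11) by (simp add: eq_neg_iff_add_eq_0 algebra_simps)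
  thus "B21 = B23*(d-b)*xb" unfolding B22 by (simp add: algebra_simps abcd_ids)
qed

lemma h_scaled_rows:
  "B13*h1 = B11*(ci*(d-c)*di)" "B23*h2 = B21*(-((d-1)*di))" "t*h3 = B31*((c-1)*ci)"
  "B13*h1 = B12*(-(rA*ci))" "B23*h2 = B22*((d-b)*di)" "t*h3 = B32*(-((c-a)*ci))"
proof -
  show "t*h3 = B31*((c-1)*ci)" unfolding B31_eq h3_def by (simp add: mult.assoc)
  show "t*h3 = B32*(-((c-a)*ci))" unfolding B32_def h3_def by (simp add: algebra_simps abcd_ids)
  show "B23*h2 = B21*(-((d-1)*di))" unfolding row2_eqs h2_def by (simp add: mult.assoc)
  show "B23*h2 = B22*((d-b)*di)" unfolding row2_eqs h2_def by (simp add: algebra_simps abcd_ids)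
  show "B13*h1 = B12*(-(rA*ci))" unfolding row1_eqs h1_def by (simp add: mult.assoc)
  let ?s = "(d-1) - (d-c)*uba*(b-1)"
  have B11: "B11 = 1 - B12 - B13" using inv_eqs(10) by (simp add: algebra_simps)
  have one: "1 = - (B13*?s)" using row1_eqs(2) by simp
  have "B11 = B13*(- ?s + (d-c)*uba - 1)"
    unfolding B11 row1_eqs(1) by (subst one) (simp add: algebra_simps)
  moreover have "h1 = (- ?s + (d-c)*uba - 1)*(ci*(d-c)*di)"
    unfolding h1_def rA_def by (simp add: algebra_simps abcd_ids uba_ids)
  ultimately show "B13*h1 = B11*(ci*(d-c)*di)" by (simp add: mult.assoc)
qed

definition "ell = udc*(c-1) - uba*(a-1)"
definition "Dp = (di-1) + (bi-1)*xa*a*(ci-1)"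

lemma basic_units:
  "is_unit a" "is_unit ai" "is_unit b" "is_unit bi" "is_unit c" "is_unit ci" "is_unit d" "is_unit di"
  "is_unit (a-1)" "is_unit xa" "is_unit (b-1)" "is_unit xb" "is_unit (c-1)" "is_unit xc"
  "is_unit (d-1)" "is_unit xd" "is_unit (b-a)" "is_unit uba" "is_unit (c-a)" "is_unit uca"
  "is_unit (d-b)" "is_unit udb" "is_unit (d-c)" "is_unit udc"
  "is_unit t" "is_unit ((d-1) - (c-1)*xa*(b-1))" "is_unit tp" "is_unit Dp" "is_unit rA" "is_unit rAi"
  "is_unit (d - c*ai*b)" "is_unit ysg"
  using a1 a2 b1 b2 c1 c2 d1 d2 xa1 xa2 xb1 xb2 xc1 xc2 xd1 xd2 uba1 uba2 uca1 uca2 udb1 udb2 udc1 udc2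
    t1 t2 tp1 tp2 rA_inverse sg1 sg2 unfolding Dp_def by (meson is_unitI)+

lemma inverse_entry_units:
  "is_unit B11" "is_unit B12" "is_unit B13" "is_unit B21" "is_unit B22" "is_unit B23"
  "is_unit B31" "is_unit B32" "is_unit t"
  unfolding B11_eq B12_eq B13_eq B21_eq B22_eq B31_eq B23_def B32_def
  by (intro is_unit_mult is_unit_uminus basic_units)+

lemma h_units: "is_unit h1" "is_unit h2" "is_unit h3"
  unfolding h1_def h2_def h3_def by (intro is_unit_mult is_unit_uminus basic_units)+

lemma h_sum_factored: "h1 + h2 + h3 = (d-c)*ell*b*xb*Dp"
proof -
  have split: "(a - b*di*c)*ci = (b-a)*(xb*(d-b)*di) - ((a-1)*b*xb*(di-1) - a*(ci-1))"
    by (simp add: algebra_simps abcd_ids)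
  have "h1 = (d-c)*(uba*(b-a))*(xb*(d-b)*di) - (d-c)*uba*((a-1)*b*xb*(di-1) - a*(ci-1))"
    unfolding h1_def rA_def by (subst mult.assoc, subst split) (simp add: algebra_simps)
  hence h1: "h1 = (d-c)*(xb*(d-b)*di) - (d-c)*uba*((a-1)*b*xb*(di-1) - a*(ci-1))"
    by (simp add: uba2)
  have ell: "(d-c)*ell = (c-1) - (d-c)*uba*(a-1)" unfolding ell_def
    by (simp add: right_diff_distrib mult.assoc[symmetric] udc1)
  show ?thesis unfolding h1 h2_def h3_def ell Dp_def
    by (simp add: algebra_simps abcd_ids)
qed

lemma B12_ell_inverse: "B12*((b-a)*ell) = 1"
proof -
  have "B12*(b-a) + B13*(d-c) = 0"
    by (rule eq_zero_by_diff[OF _ inv_eqs(16) inv_eqs(13)]) (simp add: algebra_simps)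
  hence "B12*(b-a) = -(B13*(d-c))" by (simp add: eq_neg_iff_add_eq_0)
  hence 2: "(B12*(b-a))*udc*(c-1) = -(B13*(c-1))" by (simp add: mult.assoc inverse_cancels)
  have "B12*(a-1) + B13*(c-1) + 1 = (B11 + B12*a + B13*c) - (B11 + B12 + B13) + 1"
    by (simp add: algebra_simps)
  also have "\<dots> = 0" using inv_eqs(13) inv_eqs(10) by simp
  finally have s: "B12*(a-1) + B13*(c-1) + 1 = 0" .
  have 1: "B12*((b-a)*ell) = (B12*(b-a))*udc*(c-1) - B12*((b-a)*uba)*(a-1)"
    unfolding ell_def by (simp add: algebra_simps)
  have 3: "B12*((b-a)*uba)*(a-1) = B12*(a-1)" by (simp add: uba1)
  have "B12*((b-a)*ell) = -(B13*(c-1)) - B12*(a-1)" unfolding 1 2 3 ..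
  also have "\<dots> = 1" using s by (simp add: algebra_simps eq_neg_iff_add_eq_0)
  finally show ?thesis .
qed

lemma ell_B12_inverse: "ell*(B12*(b-a)) = 1" and ell_unit: "is_unit ell"
proof -
  have "rinv B12 = (b-a)*ell"
    using rinv_mult_left_eq[OF inverse_entry_units(2), of "(b-a)*ell" 1] B12_ell_inverse
      rinv_inverse[OF inverse_entry_units(2)] by simp
  hence ell: "ell = uba*rinv B12" using uba2 by (simp add: mult.assoc[symmetric])
  hence "ell*(B12*(b-a)) = uba*(rinv B12*B12)*(b-a)" by (simp add: mult.assoc)
  thus "ell*(B12*(b-a)) = 1" using rinv_inverse[OF inverse_entry_units(2)] uba2 by simp
  show "is_unit ell" unfolding ell
    by (intro is_unit_mult is_unit_rinv basic_units inverse_entry_units)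
qed

lemma h_sum_unit: "is_unit (h1 + h2 + h3)"
  unfolding h_sum_factored by (intro is_unit_mult ell_unit basic_units)

lemma h_scaled_rows_rinv:
  "rinv B11 * B13 * h1 = ci*(d-c)*di" "rinv B21 * B23 * h2 = -((d-1)*di)" "rinv B31 * t * h3 = (c-1)*ci"
  "rinv B12 * B13 * h1 = -(rA*ci)" "rinv B22 * B23 * h2 = (d-b)*di" "rinv B32 * t * h3 = -((c-a)*ci)"
  "rinv B13 * B13 * h1 = h1" "rinv B23 * B23 * h2 = h2" "rinv t * t * h3 = h3"
  using rinv_mult_left_eq[OF inverse_entry_units(1) h_scaled_rows(1)[symmetric]]
    rinv_mult_left_eq[OF inverse_entry_units(4) h_scaled_rows(2)[symmetric]]
    rinv_mult_left_eq[OF inverse_entry_units(7) h_scaled_rows(3)[symmetric]]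
    rinv_mult_left_eq[OF inverse_entry_units(2) h_scaled_rows(4)[symmetric]]
    rinv_mult_left_eq[OF inverse_entry_units(5) h_scaled_rows(5)[symmetric]]
    rinv_mult_left_eq[OF inverse_entry_units(8) h_scaled_rows(6)[symmetric]]
    rinv_inverse[OF inverse_entry_units(3)] rinv_inverse[OF inverse_entry_units(6)]
    rinv_inverse[OF inverse_entry_units(9)]
  by (simp_all add: mult.assoc)

text \<open>The two factors of \<open>J\<^sub>2(A\<^sup>-\<^sup>1) \<cdot> diag k \<cdot> J\<^sub>2 C\<close>: the entries of \<open>row_factors\<close> are
  \<open>B\<^sub>m\<^sub>i\<^sup>-\<^sup>1 B\<^sub>m\<^sub>3 h\<^sub>m\<close> and those of \<open>col_factors\<close> are \<open>C\<^sub>3\<^sub>m C\<^sub>n\<^sub>m\<^sup>-\<^sup>1\<close>.\<close>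

definition "row_factors = mat3 (ci*(d-c)*di) (-((d-1)*di)) ((c-1)*ci)
  (-(rA*ci)) ((d-b)*di) (-((c-a)*ci)) h1 h2 h3"

definition "col_factors = mat3 (c*rAi*(b-a)) (-(d*udc*c*ai*(b-a)*bi)) 1
  (d*udb*(b-1)) (-(d*xd*(b-1)*bi)) 1 (c*uca*(a-1)) (-(c*xc*(a-1)*ai)) 1"

definition "rho1 = (ci*(d-c)*di)*(c*rAi*(b-a)) + (-((d-1)*di))*(d*udb*(b-1)) + ((c-1)*ci)*(c*uca*(a-1))"
definition "rho2 = (-(rA*ci))*(-(d*udc*c*ai*(b-a)*bi)) + ((d-b)*di)*(-(d*xd*(b-1)*bi))
  + (-((c-a)*ci))*(-(c*xc*(a-1)*ai))"

lemma offdiag_rows12: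
  "(ci*(d-c)*di)*(-(d*udc*c*ai*(b-a)*bi)) + (-((d-1)*di))*(-(d*xd*(b-1)*bi))
     + ((c-1)*ci)*(-(c*xc*(a-1)*ai)) = 0"
  "(ci*(d-c)*di) + (-((d-1)*di)) + ((c-1)*ci) = 0"
  "(-(rA*ci))*(c*rAi*(b-a)) + ((d-b)*di)*(d*udb*(b-1)) + (-((c-a)*ci))*(c*uca*(a-1)) = 0"
  "(-(rA*ci)) + ((d-b)*di) + (-((c-a)*ci)) = 0"
proof -
  have "(ci*(d-c)*di)*(-(d*udc*c*ai*(b-a)*bi)) = -(ci*((d-c)*udc)*c*ai*(b-a)*bi)"
    by (simp add: mult.assoc abcd_ids)
  also have "\<dots> = -(ai*(b-a)*bi)" by (simp add: inverse_cancels mult.assoc abcd_ids)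
  finally show "(ci*(d-c)*di)*(-(d*udc*c*ai*(b-a)*bi)) + (-((d-1)*di))*(-(d*xd*(b-1)*bi))
     + ((c-1)*ci)*(-(c*xc*(a-1)*ai)) = 0"
    by (simp add: algebra_simps abcd_ids)
  show "(ci*(d-c)*di) + (-((d-1)*di)) + ((c-1)*ci) = 0" by (simp add: algebra_simps abcd_ids)
  have "(-(rA*ci))*(c*rAi*(b-a)) = -(rA*(ci*c)*rAi*(b-a))" by (simp add: mult.assoc)
  also have "\<dots> = -(b-a)" by (simp add: c2 rA_inverse mult.assoc)
  finally have 1: "(-(rA*ci))*(c*rAi*(b-a)) = -(b-a)" .
  have 2: "((d-b)*di)*(d*udb*(b-1)) = b - 1" by (simp add: mult.assoc abcd_ids inverse_cancels)
  have 3: "(-((c-a)*ci))*(c*uca*(a-1)) = -(a-1)" by (simp add: mult.assoc abcd_ids inverse_cancels)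
  show "(-(rA*ci))*(c*rAi*(b-a)) + ((d-b)*di)*(d*udb*(b-1)) + (-((c-a)*ci))*(c*uca*(a-1)) = 0"
    unfolding 1 2 3 by (simp add: algebra_simps)
  show "(-(rA*ci)) + ((d-b)*di) + (-((c-a)*ci)) = 0" unfolding rA_def by (simp add: algebra_simps abcd_ids)
qed

lemma offdiag_row3_col1: "h1*(c*rAi*(b-a)) + h2*(d*udb*(b-1)) + h3*(c*uca*(a-1)) = 0"
proof -
  have 1: "h1*(c*rAi*(b-a)) = d - c" unfolding h1_def
    by (simp add: mult.assoc abcd_ids rA_inverse mult_inverse_cancel[OF rA_inverse(1)]
        mult_inverse_cancel[OF rA_inverse(2)] inverse_cancels)
  have e2: "(d-b)*xb*(d-1) = (d-1)*xb*(d-b)" by (simp add: algebra_simps abcd_ids)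
  have "-((d-b)*xb*(d-1)*di)*(d*udb*(b-1)) = -((d-1)*xb*((d-b)*udb)*(b-1))"
    by (simp add: mult3_assoc_eq[OF e2] mult.assoc d_ids(4))
  hence 2: "h2*(d*udb*(b-1)) = -(d-1)" unfolding h2_def by (simp add: inverse_cancels mult.assoc xb2)
  have e3: "(c-a)*xa*(c-1) = (c-1)*xa*(c-a)" by (simp add: algebra_simps abcd_ids)
  have "((c-a)*xa*(c-1)*ci)*(c*uca*(a-1)) = (c-1)*xa*((c-a)*uca)*(a-1)"
    by (simp add: mult3_assoc_eq[OF e3] mult.assoc c_ids(4))
  hence 3: "h3*(c*uca*(a-1)) = c - 1" unfolding h3_def by (simp add: inverse_cancels mult.assoc xa2)
  show ?thesis unfolding 1 2 3 by (simp add: algebra_simps)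
qed

lemma offdiag_row3_col2: "h1*(-(d*udc*c*ai*(b-a)*bi)) + h2*(-(d*xd*(b-1)*bi)) + h3*(-(c*xc*(a-1)*ai)) = 0"
proof -
  have s: "rA*ci*d = a*ci*(d-c) - (b-a)" unfolding rA_def by (simp add: algebra_simps abcd_ids)
  have "h1*(-(d*udc*c*ai*(b-a)*bi)) = -((d-c)*uba*(rA*ci*d)*udc*c*ai*(b-a)*bi)"
    unfolding h1_def by (simp add: mult.assoc)
  also have "\<dots> = -((d-c)*uba*(a*ci*(d-c))*udc*c*ai*(b-a)*bi) + (d-c)*uba*(b-a)*udc*c*ai*(b-a)*bi"
    unfolding s by (simp add: algebra_simps)
  also have "(d-c)*uba*(a*ci*(d-c))*udc*c*ai*(b-a)*bi = (d-c)*bi"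
    by (simp add: mult.assoc inverse_cancels abcd_ids)
  also have "(d-c)*uba*(b-a)*udc*c*ai*(b-a)*bi = c*ai*(b-a)*bi"
    by (simp add: mult.assoc inverse_cancels abcd_ids)
  finally have 1: "h1*(-(d*udc*c*ai*(b-a)*bi)) = -((d-c)*bi) + c*ai*(b-a)*bi" .
  have 2: "h2*(-(d*xd*(b-1)*bi)) = (d-b)*bi" unfolding h2_def
    by (simp add: mult.assoc d_ids(4) mult_inverse_cancel[OF xd1] mult_inverse_cancel[OF xb2])
  have 3: "h3*(-(c*xc*(a-1)*ai)) = -((c-a)*ai)" unfolding h3_def
    by (simp add: mult.assoc c_ids(4) mult_inverse_cancel[OF xc1] mult_inverse_cancel[OF xa2])
  show ?thesis unfolding 1 2 3 by (simp add: algebra_simps abcd_ids)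
qed

lemma row_col_factors_product: "row_factors ** col_factors = diag3 rho1 rho2 (h1 + h2 + h3)"
  unfolding row_factors_def col_factors_def diag3_def mat3_mult mat3_eq_iff
  using offdiag_rows12 offdiag_row3_col1 offdiag_row3_col2 by (simp add: rho1_def rho2_def)

lemma omega_denominator_eq: "d*udb - c*uca = -(a*uca*(d - c*ai*b)*udb)"
proof -
  have 1: "d*udb - c*uca = b*udb - a*uca" by (simp add: udb_ids uca_ids algebra_simps)
  have 2: "d - c*ai*b = (d-b) - (c-a)*ai*b" by (simp add: algebra_simps abcd_ids)
  have "a*uca*(d - c*ai*b)*udb = a*uca*((d-b)*udb) - a*(uca*(c-a))*ai*b*udb"
    unfolding 2 by (simp add: algebra_simps)
  also have "\<dots> = a*uca - b*udb" by (simp add: udb1 uca2 mult.assoc abcd_ids)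
  finally show ?thesis unfolding 1 by simp
qed

lemma omega_denominator_unit: "is_unit (d*udb - c*uca)"
  unfolding omega_denominator_eq by (intro is_unit_mult is_unit_uminus basic_units)+

definition "omega = rinv (d*udb - c*uca) * (d*udb*(b-1) - c*uca*(a-1)) * ell"

end

section \<open>Pairing the matrix with its \<open>J\<^sub>2\<close>-image\<close>

text \<open>The entries of \<open>C = (J\<^sub>2 A)\<^sup>-\<^sup>1\<close> are those of the dual instance, written \<open>D.B\<^sub>j\<^sub>k\<close>.\<close>

locale normalized_pair = normalized_units a b c d ai bi ci di xa xb xc xd uba uca udb udc ysg t tp +
  D: normalized_units ai ci bi di a c b d "-(xa*a)" "-(xc*c)" "-(xb*b)" "-(xd*d)"
    "-(a*uca*c)" "-(a*uba*b)" "-(c*udc*d)" "-(b*udb*d)" "-(d*ysg*c*ai*b)" tp t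
  for a b c d ai bi ci di xa xb xc xd uba uca udb udc ysg t tp :: "'a::ring_1"

context normalized_units
begin

lemma pair: "normalized_pair a b c d ai bi ci di xa xb xc xd uba uca udb udc ysg t tp"
  unfolding normalized_pair_def using normalized_units_axioms dual by simp

lemma dual_pair: "normalized_pair ai ci bi di a c b d (-(xa*a)) (-(xc*c)) (-(xb*b)) (-(xd*d))
  (-(a*uca*c)) (-(a*uba*b)) (-(c*udc*d)) (-(b*udb*d)) (-(d*ysg*c*ai*b)) tp t"
  unfolding normalized_pair_def using dual double_dual by simp

end

context normalized_pair
begin

lemma dual_col1_eqs: "D.B31 = c*rAi*(b-a)*D.B11" "D.B31 = -(d*udc*c*ai*(b-a)*bi)*D.B21"
proof -
  have "(ai - bi)*D.B21 + (ci - di)*D.B31 = 0"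
    by (rule eq_zero_by_diff[OF _ D.inv_eqs(4) D.inv_eqs(7)]) (simp add: algebra_simps)
  hence "(b*uba*a)*((ai - bi)*D.B21 + (ci - di)*D.B31) = 0" by simp
  moreover have "b*uba*a*(ai - bi) = 1"
  proof -
    have "a*(ai - bi) = (b-a)*bi" by (simp add: algebra_simps abcd_ids)
    hence "b*uba*a*(ai - bi) = b*(uba*(b-a))*bi" by (simp add: mult.assoc)
    thus ?thesis by (simp add: uba2 b1)
  qed
  ultimately have C21: "D.B21 = -(b*uba*a*(ci - di)*D.B31)"
    by (simp add: distrib_left mult.assoc[symmetric] eq_neg_iff_add_eq_0)
  have "-(d*udc*c*ai*(b-a)*bi)*D.B21 = d*udc*c*ai*((b-a)*(bi*b)*uba)*a*(ci - di)*D.B31"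
    unfolding C21 by (simp add: mult.assoc)
  also have "\<dots> = d*udc*(c*(ai*a)*(ci - di))*D.B31" by (simp add: b2 uba1 mult.assoc)
  also have "c*(ai*a)*(ci - di) = (d-c)*di" by (simp add: algebra_simps abcd_ids)
  also have "d*udc*((d-c)*di)*D.B31 = D.B31" by (simp add: mult.assoc inverse_cancels abcd_ids)
  finally show "D.B31 = -(d*udc*c*ai*(b-a)*bi)*D.B21" by simp
  have C11: "D.B11 = -(ai*D.B21 + ci*D.B31)"
    using D.inv_eqs(4) by (simp add: eq_neg_iff_add_eq_0 algebra_simps)
  have k: "(b-a)*ai*b = b*ai*(b-a)" by (simp add: algebra_simps abcd_ids)
  have "(b-a)*D.B11 = ((b-a)*ai*b)*uba*a*(ci - di)*D.B31 - (b-a)*ci*D.B31"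
    unfolding C11 C21 by (simp add: algebra_simps)
  also have "((b-a)*ai*b)*uba*a*(ci - di)*D.B31 = b*(ci - di)*D.B31"
    unfolding k by (simp add: mult.assoc inverse_cancels abcd_ids)
  finally have "(b-a)*D.B11 = rA*ci*D.B31" unfolding rA_def by (simp add: algebra_simps abcd_ids)
  hence "c*rAi*((b-a)*D.B11) = c*(rAi*rA)*ci*D.B31" by (simp add: mult.assoc)
  thus "D.B31 = c*rAi*(b-a)*D.B11" by (simp add: rA_inverse mult.assoc abcd_ids)
qed

lemma dual_col2_eqs: "D.B32 = d*udb*(b-1)*D.B12" "D.B32 = -(d*xd*(b-1)*bi)*D.B22"
proof -
  have "(bi-1)*D.B22 + (di-1)*D.B32 = 0"
    by (rule eq_zero_by_diff[OF _ D.inv_eqs(8) D.inv_eqs(2)]) (simp add: algebra_simps)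
  hence "(-(xb*b))*((bi-1)*D.B22 + (di-1)*D.B32) = 0" by simp
  moreover have "xb*b*(bi-1) = -1" using D.xc2 by (metis minus_mult_left minus_equation_iff)
  ultimately have C22: "D.B22 = xb*b*(di-1)*D.B32"
    by (simp add: distrib_left mult.assoc[symmetric] eq_neg_iff_add_eq_0)
  have C12: "D.B12 = -(xb*b*(di-1)*D.B32 + D.B32)"
    using D.inv_eqs(2) C22 by (simp add: eq_neg_iff_add_eq_0 algebra_simps)
  show "D.B32 = -(d*xd*(b-1)*bi)*D.B22" unfolding C22 by (simp add: algebra_simps abcd_ids)
  have k: "(b-1)*(xb*b*(di-1)) + (b-1) = -((d-b)*di)" by (simp add: algebra_simps abcd_ids)
  have "d*udb*(b-1)*D.B12 = -(d*udb*((b-1)*(xb*b*(di-1)) + (b-1))*D.B32)"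
    unfolding C12 by (simp add: algebra_simps)
  also have "\<dots> = D.B32" unfolding k by (simp add: mult.assoc inverse_cancels abcd_ids)
  finally show "D.B32 = d*udb*(b-1)*D.B12" by simp
qed

lemma dual_col3_eqs: "tp = c*uca*(a-1)*D.B13" "tp = -(c*xc*(a-1)*ai)*D.B23"
proof -
  have "(ai-1)*D.B23 + (ci-1)*tp = 0"
    by (rule eq_zero_by_diff[OF _ D.inv_eqs(6) D.inv_eqs(3)]) (simp add: algebra_simps)
  hence "(-(xa*a))*((ai-1)*D.B23 + (ci-1)*tp) = 0" by simp
  moreover have "xa*a*(ai-1) = -1" using D.xa2 by (metis minus_mult_left minus_equation_iff)
  ultimately have C23: "D.B23 = xa*a*(ci-1)*tp"
    by (simp add: distrib_left mult.assoc[symmetric] eq_neg_iff_add_eq_0)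
  have C13: "D.B13 = -(xa*a*(ci-1)*tp + tp)"
    using D.inv_eqs(3) C23 by (simp add: eq_neg_iff_add_eq_0 algebra_simps)
  show "tp = -(c*xc*(a-1)*ai)*D.B23" unfolding C23 by (simp add: algebra_simps abcd_ids)
  have k: "(a-1)*(xa*a*(ci-1)) + (a-1) = -((c-a)*ci)" by (simp add: algebra_simps abcd_ids)
  have "c*uca*(a-1)*D.B13 = -(c*uca*((a-1)*(xa*a*(ci-1)) + (a-1))*tp)"
    unfolding C13 by (simp add: algebra_simps)
  also have "\<dots> = tp" unfolding k by (simp add: mult.assoc inverse_cancels abcd_ids)
  finally show "tp = c*uca*(a-1)*D.B13" by simp
qed

lemma dual_scaled_cols_rinv:
  "D.B31 * rinv D.B11 = c*rAi*(b-a)" "D.B31 * rinv D.B21 = -(d*udc*c*ai*(b-a)*bi)" "D.B31 * rinv D.B31 = 1"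
  "D.B32 * rinv D.B12 = d*udb*(b-1)" "D.B32 * rinv D.B22 = -(d*xd*(b-1)*bi)" "D.B32 * rinv D.B32 = 1"
  "tp * rinv D.B13 = c*uca*(a-1)" "tp * rinv D.B23 = -(c*xc*(a-1)*ai)" "tp * rinv tp = 1"
  using mult_rinv_right_eq[OF D.inverse_entry_units(1) dual_col1_eqs(1)]
    mult_rinv_right_eq[OF D.inverse_entry_units(4) dual_col1_eqs(2)]
    mult_rinv_right_eq[OF D.inverse_entry_units(2) dual_col2_eqs(1)]
    mult_rinv_right_eq[OF D.inverse_entry_units(5) dual_col2_eqs(2)]
    mult_rinv_right_eq[OF D.inverse_entry_units(3) dual_col3_eqs(1)]
    mult_rinv_right_eq[OF D.inverse_entry_units(6) dual_col3_eqs(2)]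
    rinv_inverse[OF D.inverse_entry_units(7)] rinv_inverse[OF D.inverse_entry_units(8)]
    rinv_inverse[OF D.inverse_entry_units(9)]
  by simp_all

lemma J2_diag_J2_product:
  "J2 (mat3 B11 B12 B13 B21 B22 B23 B31 B32 t) **
    (diag3 (B13*h1*D.B31) (B23*h2*D.B32) (t*h3*tp) ** J2 (mat3 D.B11 D.B12 D.B13 D.B21 D.B22 D.B23 D.B31 D.B32 tp))
   = diag3 rho1 rho2 (h1 + h2 + h3)"
proof -
  have "J2 (mat3 B11 B12 B13 B21 B22 B23 B31 B32 t) **
    (diag3 (B13*h1*D.B31) (B23*h2*D.B32) (t*h3*tp) ** J2 (mat3 D.B11 D.B12 D.B13 D.B21 D.B22 D.B23 D.B31 D.B32 tp))
    = mat3 (rinv B11 * B13 * h1) (rinv B21 * B23 * h2) (rinv B31 * t * h3)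
        (rinv B12 * B13 * h1) (rinv B22 * B23 * h2) (rinv B32 * t * h3)
        (rinv B13 * B13 * h1) (rinv B23 * B23 * h2) (rinv t * t * h3) **
      mat3 (D.B31 * rinv D.B11) (D.B31 * rinv D.B21) (D.B31 * rinv D.B31)
        (D.B32 * rinv D.B12) (D.B32 * rinv D.B22) (D.B32 * rinv D.B32)
        (tp * rinv D.B13) (tp * rinv D.B23) (tp * rinv tp)"
    unfolding J2_mat3 diag3_def mat3_mult by (simp add: mult.assoc)
  also have "\<dots> = row_factors ** col_factors"
    unfolding h_scaled_rows_rinv dual_scaled_cols_rinv row_factors_def col_factors_def ..
  finally show ?thesis unfolding row_col_factors_product .
qed

lemma omega_middle_eq: "(d*udb*(b-1) - c*uca*(a-1))*D.B11 = -(d*udb - c*uca)"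
proof -
  have "(b-1)*D.B11 + 1 - (d-b)*di*D.B31
      = b*(D.B11 + bi*D.B21 + di*D.B31) - (D.B11 + D.B21 + D.B31) + 1"
    by (simp add: algebra_simps abcd_ids)
  hence b: "(b-1)*D.B11 + 1 = (d-b)*di*D.B31" using D.inv_eqs(1) D.inv_eqs(7) by simp
  have "(a-1)*D.B11 + 1 - (c-a)*ci*D.B31
      = a*(D.B11 + ai*D.B21 + ci*D.B31) - (D.B11 + D.B21 + D.B31) + 1"
    by (simp add: algebra_simps abcd_ids)
  hence a: "(a-1)*D.B11 + 1 = (c-a)*ci*D.B31" using D.inv_eqs(1) D.inv_eqs(4) by simp
  have "(d*udb*(b-1) - c*uca*(a-1))*D.B11 + (d*udb - c*uca)
      = d*udb*((b-1)*D.B11 + 1) - c*uca*((a-1)*D.B11 + 1)"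
    by (simp add: algebra_simps)
  also have "\<dots> = 0" unfolding a b by (simp add: mult.assoc inverse_cancels abcd_ids)
  finally show ?thesis using eq_neg_iff_add_eq_0 by blast
qed

text \<open>The scaling \<open>k\<^sub>1\<close> is the inverse of \<open>\<omega>\<close>.\<close>

lemma omega_inverse: "omega * (B13*h1*D.B31) = 1" "(B13*h1*D.B31) * omega = 1"
proof -
  have "B13*h1*D.B31 = -(B12*(rA*ci)*(c*rAi*(b-a)*D.B11))"
    using h_scaled_rows(4) by (subst dual_col1_eqs(1)) simp
  also have "\<dots> = -(B12*(b-a)*D.B11)"
    by (simp add: mult.assoc abcd_ids mult_inverse_cancel[OF rA_inverse(1)])
  finally have k1: "B13*h1*D.B31 = -(B12*(b-a)*D.B11)" .
  have "omega * (B13*h1*D.B31)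
     = - (rinv (d*udb - c*uca) * ((d*udb*(b-1) - c*uca*(a-1)) * (ell * (B12*(b-a))) * D.B11))"
    unfolding k1 omega_def by (simp add: mult.assoc)
  also have "\<dots> = rinv (d*udb - c*uca) * (d*udb - c*uca)"
    unfolding ell_B12_inverse by (simp only: mult_1_right omega_middle_eq mult_minus_right minus_minus)
  also have "\<dots> = 1" using rinv_inverse[OF omega_denominator_unit] by simp
  finally show left: "omega * (B13*h1*D.B31) = 1" .
  have "is_unit (B13*h1*D.B31)" by (intro is_unit_mult inverse_entry_units h_units D.inverse_entry_units)
  from unit_left_inverse_imp_right[OF this left] show "(B13*h1*D.B31) * omega = 1" .
qed

lemma J2_diagonal_pair_instance: "J2_diagonal_pair
  B11 B12 B13 B21 B22 B23 B31 B32 t D.B11 D.B12 D.B13 D.B21 D.B22 D.B23 D.B31 D.B32 tp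
  (B13*h1*D.B31) (B23*h2*D.B32) (t*h3*tp) (D.B13*D.h1*B31) (D.B23*D.h2*B32) (tp*D.h3*t)
  rho1 rho2 (h1 + h2 + h3) D.rho1 D.rho2 (D.h1 + D.h2 + D.h3)"
proof unfold_locales
  show "J2 (mat3 D.B11 D.B12 D.B13 D.B21 D.B22 D.B23 D.B31 D.B32 tp) **
    (diag3 (D.B13*D.h1*B31) (D.B23*D.h2*B32) (tp*D.h3*t) ** J2 (mat3 B11 B12 B13 B21 B22 B23 B31 B32 t)) =
    diag3 D.rho1 D.rho2 (D.h1 + D.h2 + D.h3)"
    using normalized_pair.J2_diag_J2_product[OF dual_pair] unfolding double_dual_params .
qed (intro J2_diag_J2_product is_unit_mult inverse_entry_units D.inverse_entry_units h_units D.h_units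
      h_sum_unit D.h_sum_unit)+

lemma Phi_square:
  defines "A \<equiv> mat3 1 1 1 1 a b 1 c d"
  shows "dom_Phi A \<and> dom_Phi (Phi A) \<and> dom_Jinv A \<and> is_unit omega
    \<and> Phi (Phi A) = conj_mat omega (Phi_inv A)"
proof -
  let ?B = "mat3 B11 B12 B13 B21 B22 B23 B31 B32 t"
  let ?C = "mat3 D.B11 D.B12 D.B13 D.B21 D.B22 D.B23 D.B31 D.B32 tp"
  have minv_A: "minvertible A \<and> minv A = ?B"
    unfolding A_def by (intro minvertible_minv_eq mat3_inverse)
  have "rinv a = ai" "rinv b = bi" "rinv c = ci" "rinv d = di"
    using rinv_unique a1 a2 b1 b2 c1 c2 d1 d2 by blast+
  then have J2_A: "J2 A = mat3 1 1 1 1 ai ci 1 bi di" unfolding A_def J2_mat3 rinv_one by simp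
  have minv_J2_A: "minvertible (J2 A) \<and> minv (J2 A) = ?C"
    unfolding J2_A by (intro minvertible_minv_eq D.mat3_inverse)
  note Phi_square_conj = J2_diagonal_pair.Phi_square_conj[OF J2_diagonal_pair_instance]
  have Phi_A: "Phi A = J2 (LambdaL ?B)" unfolding Phi_def using minv_A by simp
  have A_units: "all_units A" "hat A" unfolding A_def all_units_def hat_def forall_3 mat3_nth
    using is_unit_one basic_units by simp_all
  have "rinv (B13*h1*D.B31) = omega" using omega_inverse by (intro rinv_unique)
  moreover have "is_unit omega" using omega_inverse by (intro is_unitI)
  moreover have "dom_Phi A" unfolding dom_Phi_def dom_J_def J1_def
    using minv_A A_units inverse_entry_units unfolding all_units_def forall_3 by (simp add: mat3_nth)
  moreover have "dom_Jinv A" unfolding dom_Jinv_def using minv_J2_A A_units by simp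
  moreover have "Phi_inv A = LambdaR ?C" unfolding Phi_inv_def Jinv_def J1_def using minv_J2_A by simp
  ultimately show ?thesis
    unfolding dom_Phi_def dom_J_def J1_def Phi_A using Phi_square_conj by (simp add: Phi_def)
qed

end

section \<open>Units among the entries of a matrix in \<open>\<^bold>S\<close>\<close>

lemma in_S_minor_units:
  assumes "in_S (mat3 1 1 1 1 a b 1 c d)"
  shows "is_unit a" "is_unit b" "is_unit c" "is_unit d"
    "is_unit (a-1)" "is_unit (b-1)" "is_unit (c-1)" "is_unit (d-1)"
    "is_unit (b-a)" "is_unit (c-a)" "is_unit (d-b)" "is_unit (d-c)" "is_unit (d - c*rinv a*b)"
proof -
  let ?A = "mat3 1 1 1 1 a b 1 c (d::'a::ring_1)"
  have sub: "sub_invertible ?A I K" if "I \<noteq> {}" "card I = card K" for I K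
    using assms that unfolding in_S_def by blast
  have u1: "is_unit (?A$j$k)" for j k
    by (rule sub_invertible_singleton_unit, rule sub) auto
  have u2: "is_unit (?A$i2$k2 - ?A$i2$k1 * rinv (?A$i1$k1) * ?A$i1$k2)"
    if "i1 \<noteq> i2" "k1 \<noteq> k2" for i1 i2 k1 k2
    using that by (intro sub_invertible_schur_unit sub u1) auto
  show "is_unit a" "is_unit b" "is_unit c" "is_unit d"
    using u1[of 2 2] u1[of 2 3] u1[of 3 2] u1[of 3 3] by (simp_all add: mat3_nth)
  show "is_unit (a-1)" "is_unit (b-1)" "is_unit (c-1)" "is_unit (d-1)"
    "is_unit (b-a)" "is_unit (c-a)" "is_unit (d-b)" "is_unit (d-c)" "is_unit (d - c*rinv a*b)"
    using u2[of 1 2 1 2] u2[of 1 2 1 3] u2[of 1 3 1 2] u2[of 1 3 1 3] u2[of 1 2 2 3]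
      u2[of 2 3 1 2] u2[of 2 3 1 3] u2[of 1 3 2 3] u2[of 2 3 2 3]
    by (simp_all add: mat3_nth rinv_one)
qed

lemma in_S_schur_units:
  assumes "in_S (mat3 1 1 1 1 a b 1 c d)"
  shows "is_unit ((d-1) - (c-1)*rinv (a-1)*(b-1))"
    "is_unit ((rinv d - 1) + (rinv b - 1)*rinv (a-1)*a*(rinv c - 1))"
proof -
  let ?A = "mat3 1 1 1 1 a b 1 c (d::'a::ring_1)"
  note units = in_S_minor_units[OF assms]
  have "sub_invertible ?A UNIV UNIV" using assms unfolding in_S_def by simp
  then obtain N where "?A ** N = mat 1" "N ** ?A = mat 1"
    using sub_invertible_UNIV_minvertible unfolding minvertible_def by blast
  then show "is_unit ((d-1) - (c-1)*rinv (a-1)*(b-1))" using units(5) by (rule normalized_schur_unit)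
  have "J2 ?A = mat3 1 1 1 1 (rinv a) (rinv c) 1 (rinv b) (rinv d)" unfolding J2_mat3 rinv_one ..
  then obtain M where M: "mat3 1 1 1 1 (rinv a) (rinv c) 1 (rinv b) (rinv d) ** M = mat 1"
    "M ** mat3 1 1 1 1 (rinv a) (rinv c) 1 (rinv b) (rinv d) = mat 1"
    using assms unfolding in_S_def minvertible_def by auto
  have "a * rinv a = 1" "rinv a * a = 1" "(a-1) * rinv (a-1) = 1" "rinv (a-1) * (a-1) = 1"
    using rinv_inverse units(1,5) by blast+
  note ids = shift_inverse_ids[OF this]
  have "(rinv a - 1)*(-(rinv (a-1)*a)) = 1" "(-(rinv (a-1)*a))*(rinv a - 1) = 1"
    by (simp_all add: algebra_simps ids)
  then have "rinv (rinv a - 1) = -(rinv (a-1)*a)" "is_unit (rinv a - 1)"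
    by (blast intro: rinv_unique is_unitI)+
  with normalized_schur_unit[OF M] show
    "is_unit ((rinv d - 1) + (rinv b - 1)*rinv (a-1)*a*(rinv c - 1))"
    by (simp add: mult.assoc)
qed

lemma in_S_normalized_units:
  assumes "in_S (mat3 1 1 1 1 a b 1 c d)"
  shows "normalized_units a b c d (rinv a) (rinv b) (rinv c) (rinv d)
    (rinv (a-1)) (rinv (b-1)) (rinv (c-1)) (rinv (d-1))
    (rinv (b-a)) (rinv (c-a)) (rinv (d-b)) (rinv (d-c)) (rinv (d - c*rinv a*b))
    (rinv ((d-1) - (c-1)*rinv (a-1)*(b-1))) (rinv ((rinv d - 1) + (rinv b - 1)*rinv (a-1)*a*(rinv c - 1)))"
proof -
  note units = in_S_minor_units[OF assms] in_S_schur_units[OF assms]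
  show ?thesis by unfold_locales (simp_all add: rinv_inverse units)
qed

theorem theorem4:
  fixes a b c d :: "'a::ring_1"
  defines "A \<equiv> mat3 1 1 1 1 a b 1 c d"
  defines "\<omega> \<equiv> rinv (d * rinv (d - b) - c * rinv (c - a))
              * (d * rinv (d - b) * (b - 1) - c * rinv (c - a) * (a - 1))
              * (rinv (d - c) * (c - 1) - rinv (b - a) * (a - 1))"
  assumes "in_hatS A"
  shows "dom_Phi A \<and> dom_Phi (Phi A) \<and> dom_Jinv A
         \<and> is_unit (d - b) \<and> is_unit (c - a) \<and> is_unit (d - c) \<and> is_unit (b - a)
         \<and> is_unit (d * rinv (d - b) - c * rinv (c - a)) \<and> is_unit \<omega>
         \<and> Phi (Phi A) = conj_mat \<omega> (Phi_inv A)"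
proof -
  have S: "in_S (mat3 1 1 1 1 a b 1 c d)" using assms(3) unfolding A_def in_hatS_def by simp
  note N = in_S_normalized_units[OF S]
  show ?thesis
    using normalized_pair.Phi_square[OF normalized_units.pair[OF N]]
      normalized_units.omega_denominator_unit[OF N] in_S_minor_units[OF S]
    unfolding A_def \<omega>_def normalized_units.omega_def[OF N] normalized_units.ell_def[OF N] by simp
qed

end
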